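(* For each $k\in\mathbb N$, the class $\mathcal P_k$ is inner-product compatible: for all $\boldsymbol R,\boldsymbol S\in\mathcal P_k$ there exists $\boldsymbol Q\in\mathcal P_k$ such that the graph $\mathrm{tr}(\boldsymbol R^*\cdot\boldsymbol S)$ equals the underlying unlabelled graph of $\boldsymbol Q$.
   Context: A $(k,k)$-bilabelled graph is $\boldsymbol F=(F,\boldsymbol u,\boldsymbol v)$ with $\boldsymbol u,\boldsymbol v\in V(F)^k$; $F$ is its underlying graph. $\boldsymbol F^*=(F,\boldsymbol v,\boldsymbol u)$. $\mathrm{tr}(\boldsymbol F)$ is the unlabelled graph obtained from $F$ by identifying $u_i$ with $v_i$ for all $i$. Series composition $\boldsymbol F\cdot\boldsymbol F'$: disjoint union with $v_i$ identified with $u'_i$, multiple edges removed, labels $(\boldsymbol u,\boldsymbol v')$. Parallel composition $\boldsymbol F\odot\boldsymbol F'$: identify $u_i$ with $u'_i$ and $v_i$ with $v'_i$, multiple edges removed. For $\sigma\in\mathfrak S_{2k}$, $\boldsymbol F^\sigma$ has in-labels $(w_{\sigma(1)},\dots,w_{\sigma(k)})$ and out-labels $(w_{\sigma(k+1)},\dots,w_{\sigma(2k)})$, $\boldsymbol w=(u_1,\dots,u_k,v_1,\dots,v_k)$. $\mathscr C_k$ = cyclic group of rotations of the cyclic sequence $(1,\dots,k,2k,\dots,k+1)$. Bilabelled minors: via edge contraction, edge deletion, deletion of unlabelled vertices. $\boldsymbol C_k$: vertices $[2k]$, in-labels $(1,\dots,k)$, out-labels $(k+1,\dots,2k)$, edges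 $\{i,i+1\}$ ($i\in[2k]\setminus\{k,2k\}$), $\{1,k+1\},\{k,2k\}$; $\boldsymbol M_k$: same vertices/labels, edges $\{i,i+k\}$. $\mathcal Q_k^P,\mathcal Q_k^S$ = bilabelled minors of $\boldsymbol C_k,\boldsymbol M_k$; $\mathcal Q_k$ their union. $\mathcal P_k$ = smallest class of $(k,k)$-bilabelled graphs containing $\mathcal Q_k$, closed under series composition, under $\boldsymbol F\mapsto\boldsymbol F\odot\boldsymbol Q$ ($\boldsymbol Q\in\mathcal Q_k^P$), and under $\boldsymbol F\mapsto\boldsymbol F^\sigma$ ($\sigma\in\mathscr C_k$). *)

theory Defs
  imports Main
begin

text \<open>A bilabelled graph: finite vertex set, edge set (each edge is a nonempty set of at most
two vertices; a singleton is a loop; multiple edges are automatically merged since edges form a set),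
in-labels and out-labels (lists of vertices, not necessarily distinct).\<close>

record 'v bgr =
  bV :: "'v set"
  bE :: "'v set set"
  bin :: "'v list"
  bout :: "'v list"

definition wf_bgr :: "nat \<Rightarrow> 'v bgr \<Rightarrow> bool" where
  "wf_bgr k G \<longleftrightarrow> finite (bV G) \<and> (\<forall>e\<in>bE G. e \<noteq> {} \<and> e \<subseteq> bV G \<and> card e \<le> 2)
     \<and> length (bin G) = k \<and> length (bout G) = k \<and> set (bin G) \<subseteq> bV G \<and> set (bout G) \<subseteq> bV G"

definition quot :: "'a bgr \<Rightarrow> ('a \<times> 'a) set \<Rightarrow> ('a \<Rightarrow> 'b) \<Rightarrow> 'b bgr \<Rightarrow> bool" where
  "quot G P h H \<longleftrightarrow> P \<subseteq> bV G \<times> bV G \<and> bV H = h ` bV G \<and> bE H = (\<lambda>e. h ` e) ` bE G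
     \<and> bin H = map h (bin G) \<and> bout H = map h (bout G)
     \<and> (\<forall>x\<in>bV G. \<forall>y\<in>bV G. h x = h y \<longleftrightarrow> (x, y) \<in> (P \<union> P\<inverse>)\<^sup>*)"

definition iso_b :: "'a bgr \<Rightarrow> 'b bgr \<Rightarrow> bool" where
  "iso_b G H \<longleftrightarrow> (\<exists>f. bij_betw f (bV G) (bV H) \<and> bE H = (\<lambda>e. f ` e) ` bE G
     \<and> bin H = map f (bin G) \<and> bout H = map f (bout G))"

definition iso_u :: "'a set \<times> 'a set set \<Rightarrow> 'b set \<times> 'b set set \<Rightarrow> bool" where
  "iso_u X Y \<longleftrightarrow> (\<exists>f. bij_betw f (fst X) (fst Y) \<and> snd Y = (\<lambda>e. f ` e) ` snd X)"

definition underlying :: "'a bgr \<Rightarrow> 'a set \<times> 'a set set" where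
  "underlying G = (bV G, bE G)"

definition bstar :: "'a bgr \<Rightarrow> 'a bgr" where
  "bstar G = G\<lparr>bin := bout G, bout := bin G\<rparr>"

definition btr :: "'a bgr \<Rightarrow> 'b set \<times> 'b set set \<Rightarrow> bool" where
  "btr T X \<longleftrightarrow> (\<exists>h. quot T (set (zip (bin T) (bout T))) h
       \<lparr>bV = fst X, bE = snd X, bin = map h (bin T), bout = map h (bout T)\<rparr>)"

definition dunion_ser :: "'a bgr \<Rightarrow> 'b bgr \<Rightarrow> ('a + 'b) bgr" where
  "dunion_ser F F' = \<lparr>bV = Inl ` bV F \<union> Inr ` bV F',
     bE = (\<lambda>e. Inl ` e) ` bE F \<union> (\<lambda>e. Inr ` e) ` bE F',
     bin = map Inl (bin F), bout = map Inr (bout F')\<rparr>"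

definition series :: "'a bgr \<Rightarrow> 'b bgr \<Rightarrow> 'c bgr \<Rightarrow> bool" where
  "series F F' H \<longleftrightarrow> (\<exists>h. quot (dunion_ser F F')
       (set (zip (map Inl (bout F)) (map Inr (bin F')))) h H)"

definition dunion_par :: "'a bgr \<Rightarrow> 'b bgr \<Rightarrow> ('a + 'b) bgr" where
  "dunion_par F F' = \<lparr>bV = Inl ` bV F \<union> Inr ` bV F',
     bE = (\<lambda>e. Inl ` e) ` bE F \<union> (\<lambda>e. Inr ` e) ` bE F',
     bin = map Inl (bin F), bout = map Inl (bout F)\<rparr>"

definition parallel :: "'a bgr \<Rightarrow> 'b bgr \<Rightarrow> 'c bgr \<Rightarrow> bool" where
  "parallel F F' H \<longleftrightarrow> (\<exists>h. quot (dunion_par F F')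
       (set (zip (map Inl (bin F)) (map Inr (bin F'))) \<union>
        set (zip (map Inl (bout F)) (map Inr (bout F')))) h H)"

text \<open>Positions 0..2k-1 of w = in-labels @ out-labels; the cyclic sequence is
(0,...,k-1,2k-1,...,k); rot k r rotates it by r steps.\<close>

definition cyc_seq :: "nat \<Rightarrow> nat list" where
  "cyc_seq k = [0..<k] @ rev [k..<2*k]"

definition cyc_pos :: "nat \<Rightarrow> nat \<Rightarrow> nat" where
  "cyc_pos k i = (if i < k then i else 3*k - 1 - i)"

definition rot :: "nat \<Rightarrow> nat \<Rightarrow> nat \<Rightarrow> nat" where
  "rot k r i = cyc_seq k ! ((cyc_pos k i + r) mod (2*k))"

definition bperm :: "(nat \<Rightarrow> nat) \<Rightarrow> nat \<Rightarrow> 'a bgr \<Rightarrow> 'a bgr" where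
  "bperm \<sigma> k F = (let w = bin F @ bout F in
     F\<lparr>bin := map (\<lambda>i. w ! \<sigma> i) [0..<k], bout := map (\<lambda>i. w ! \<sigma> i) [k..<2*k]\<rparr>)"

definition del_edge :: "'a bgr \<Rightarrow> 'a bgr \<Rightarrow> bool" where
  "del_edge G H \<longleftrightarrow> (\<exists>e\<in>bE G. H = G\<lparr>bE := bE G - {e}\<rparr>)"

definition del_vertex :: "'a bgr \<Rightarrow> 'a bgr \<Rightarrow> bool" where
  "del_vertex G H \<longleftrightarrow> (\<exists>v\<in>bV G. v \<notin> set (bin G) \<and> v \<notin> set (bout G) \<and>
     H = G\<lparr>bV := bV G - {v}, bE := {e\<in>bE G. v \<notin> e}\<rparr>)"

definition contract :: "'a bgr \<Rightarrow> 'a bgr \<Rightarrow> bool" where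
  "contract G H \<longleftrightarrow> (\<exists>e\<in>bE G. \<exists>h. quot (G\<lparr>bE := bE G - {e}\<rparr>) {(x, y). e = {x, y}} h H)"

inductive bminor :: "nat bgr \<Rightarrow> nat bgr \<Rightarrow> bool" for G where
  minor_iso: "iso_b G H \<Longrightarrow> bminor G H"
| minor_step: "bminor G H \<Longrightarrow> del_edge H H' \<or> del_vertex H H' \<or> contract H H' \<Longrightarrow> bminor G H'"

definition Ck :: "nat \<Rightarrow> nat bgr" where
  "Ck k = \<lparr>bV = {0..<2*k},
     bE = {{i, i+1} | i. i < k - 1 \<or> (k \<le> i \<and> i < 2*k - 1)}
          \<union> (if k \<ge> 1 then {{0, k}, {k - 1, 2*k - 1}} else {}),
     bin = [0..<k], bout = [k..<2*k]\<rparr>"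

definition Mk :: "nat \<Rightarrow> nat bgr" where
  "Mk k = \<lparr>bV = {0..<2*k}, bE = {{i, i+k} | i. i < k},
     bin = [0..<k], bout = [k..<2*k]\<rparr>"

definition QP :: "nat \<Rightarrow> nat bgr set" where
  "QP k = {G. bminor (Ck k) G}"

definition QS :: "nat \<Rightarrow> nat bgr set" where
  "QS k = {G. bminor (Mk k) G}"

inductive_set PP :: "nat \<Rightarrow> nat bgr set" for k where
  PP_base: "Q \<in> QP k \<union> QS k \<Longrightarrow> Q \<in> PP k"
| PP_series: "F \<in> PP k \<Longrightarrow> F' \<in> PP k \<Longrightarrow> series F F' H \<Longrightarrow> H \<in> PP k"
| PP_parallel: "F \<in> PP k \<Longrightarrow> Q \<in> QP k \<Longrightarrow> parallel F Q H \<Longrightarrow> H \<in> PP k"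
| PP_perm: "F \<in> PP k \<Longrightarrow> bperm (rot k r) k F \<in> PP k"

end

theory Submission
  imports Defs
begin

text \<open>Reversal maps \<open>\<P>\<^sub>k\<close> into itself: \<open>C\<^sub>k\<close> and \<open>M\<^sub>k\<close> are self-dual, reversal turns series compositions
  around, and it conjugates each rotation in \<open>\<C>\<^sub>k\<close> into the inverse rotation. Hence
  \<open>R\<^sup>* \<cdot> S \<in> \<P>\<^sub>k\<close>, and it suffices to realise the trace of an arbitrary \<open>T \<in> \<P>\<^sub>k\<close>, the quotient of
  \<open>T\<close> identifying each in-label \<open>u\<^sub>i\<close> with the out-label \<open>v\<^sub>i\<close>, as the underlying graph of a member
  of \<open>\<P>\<^sub>k\<close>. The pairs are identified one at a time, for \<open>i = k, \<dots>, 1\<close>: series composition on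
  both sides with an edgeless graph of \<open>\<P>\<^sub>k\<close> (a parallel composition of minors of \<open>M\<^sub>k\<close> and
  \<open>C\<^sub>k\<close>) copies \<open>u\<^sub>i\<close> and \<open>v\<^sub>i\<close> to all label positions \<open>j \<ge> i\<close>, and parallel composition with the
  minor of \<open>C\<^sub>k\<close> in which the edge joining in-label \<open>k\<close> and out-label \<open>k\<close> is contracted then glues
  them. Every step takes a quotient of the vertex set, and two quotients of a graph by the same
  relation are isomorphic.\<close>

definition bgr_map :: "('a \<Rightarrow> 'b) \<Rightarrow> 'a bgr \<Rightarrow> 'b bgr" where
  "bgr_map h G = \<lparr>bV = h ` bV G, bE = (\<lambda>e. h ` e) ` bE G,
     bin = map h (bin G), bout = map h (bout G)\<rparr>"

lemma bgr_map_simps [simp]: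
  "bV (bgr_map h G) = h ` bV G" "bE (bgr_map h G) = (\<lambda>e. h ` e) ` bE G"
  "bin (bgr_map h G) = map h (bin G)" "bout (bgr_map h G) = map h (bout G)"
  by (simp_all add: bgr_map_def)

lemma bgr_eqI:
  "bV G = bV H \<Longrightarrow> bE G = bE H \<Longrightarrow> bin G = bin H \<Longrightarrow> bout G = bout H \<Longrightarrow> (G :: 'a bgr) = H"
  by (cases G; cases H) simp

lemma bgr_map_comp: "bgr_map g (bgr_map h G) = bgr_map (g \<circ> h) G"
  by (rule bgr_eqI) (simp_all add: image_comp)

lemma bgr_map_cong:
  assumes "wf_bgr k G" and eq: "\<And>x. x \<in> bV G \<Longrightarrow> h x = h' x"
  shows "bgr_map h G = bgr_map h' G"
proof (rule bgr_eqI)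
  have E: "\<And>e. e \<in> bE G \<Longrightarrow> e \<subseteq> bV G" and L: "set (bin G) \<subseteq> bV G" "set (bout G) \<subseteq> bV G"
    using assms(1) unfolding wf_bgr_def by blast+
  show "bV (bgr_map h G) = bV (bgr_map h' G)" using eq by simp
  show "bE (bgr_map h G) = bE (bgr_map h' G)"
    using E eq by (simp add: subset_iff cong: image_cong)
  show "bin (bgr_map h G) = bin (bgr_map h' G)" "bout (bgr_map h G) = bout (bgr_map h' G)"
    using L eq by (auto intro: map_cong)
qed

lemma wf_bgr_map:
  assumes "wf_bgr k G"
  shows "wf_bgr k (bgr_map h G)"
proof -
  have "card (h ` e) \<le> 2" if "e \<in> bE G" for e
  proof -
    have "finite e" using assms that finite_subset unfolding wf_bgr_def by metis
    then show ?thesis using assms that card_image_le[of e h] unfolding wf_bgr_def by fastforce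
  qed
  then show ?thesis using assms unfolding wf_bgr_def by (auto simp: image_mono)
qed

lemma iso_b_iff_bgr_map: "iso_b G H \<longleftrightarrow> (\<exists>f. inj_on f (bV G) \<and> H = bgr_map f G)"
proof
  assume "iso_b G H"
  then obtain f where f: "bij_betw f (bV G) (bV H)" "bE H = (\<lambda>e. f ` e) ` bE G"
    "bin H = map f (bin G)" "bout H = map f (bout G)" unfolding iso_b_def by blast
  then have "H = bgr_map f G" by (intro bgr_eqI) (simp_all add: bij_betw_def)
  with f(1) show "\<exists>f. inj_on f (bV G) \<and> H = bgr_map f G" by (auto simp: bij_betw_def)
next
  assume "\<exists>f. inj_on f (bV G) \<and> H = bgr_map f G"
  then show "iso_b G H" unfolding iso_b_def bij_betw_def by auto
qed

lemma iso_b_refl: "iso_b G G"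
proof -
  have "G = bgr_map id G" by (rule bgr_eqI) simp_all
  then show ?thesis unfolding iso_b_iff_bgr_map using inj_on_id by blast
qed

lemma iso_b_trans:
  assumes "iso_b G H" and "iso_b H K"
  shows "iso_b G K"
proof -
  obtain f g where "inj_on f (bV G)" "H = bgr_map f G" "inj_on g (bV H)" "K = bgr_map g H"
    using assms unfolding iso_b_iff_bgr_map by blast
  then have "inj_on (g \<circ> f) (bV G) \<and> K = bgr_map (g \<circ> f) G"
    by (simp add: bgr_map_comp comp_inj_on)
  then show ?thesis unfolding iso_b_iff_bgr_map by blast
qed

lemma wf_bgr_iso_b: "iso_b G H \<Longrightarrow> wf_bgr k G \<Longrightarrow> wf_bgr k H"
  unfolding iso_b_iff_bgr_map using wf_bgr_map by blast

section \<open>Quotient maps\<close>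

definition quotient_map :: "'a set \<Rightarrow> ('a \<times> 'a) set \<Rightarrow> ('a \<Rightarrow> 'b) \<Rightarrow> bool" where
  "quotient_map V P h \<longleftrightarrow> (\<forall>x\<in>V. \<forall>y\<in>V. h x = h y \<longleftrightarrow> (x, y) \<in> (P \<union> P\<inverse>)\<^sup>*)"

lemma quot_iff:
  "quot G P h H \<longleftrightarrow> P \<subseteq> bV G \<times> bV G \<and> H = bgr_map h G \<and> quotient_map (bV G) P h"
proof -
  have "H = bgr_map h G \<longleftrightarrow> bV H = h ` bV G \<and> bE H = (\<lambda>e. h ` e) ` bE G
      \<and> bin H = map h (bin G) \<and> bout H = map h (bout G)"
  proof
    assume "bV H = h ` bV G \<and> bE H = (\<lambda>e. h ` e) ` bE G
      \<and> bin H = map h (bin G) \<and> bout H = map h (bout G)"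
    then show "H = bgr_map h G" by (intro bgr_eqI) simp_all
  qed simp
  then show ?thesis unfolding quot_def quotient_map_def by (simp only: conj_assoc)
qed

lemma equiv_closure_sym: "(x, y) \<in> (P \<union> P\<inverse>)\<^sup>* \<Longrightarrow> (y, x) \<in> (P \<union> P\<inverse>)\<^sup>*"
  by (meson sym_Un_converse sym_rtrancl symD)

lemma equiv_closure_map:
  assumes "(x, y) \<in> (P \<union> P\<inverse>)\<^sup>*" and "\<And>a b. (a, b) \<in> P \<Longrightarrow> (f a, f b) \<in> (Q \<union> Q\<inverse>)\<^sup>*"
  shows "(f x, f y) \<in> (Q \<union> Q\<inverse>)\<^sup>*"
  using assms(1)
proof (induction rule: rtrancl_induct)
  case (step y z)
  from step.hyps(2) have "(f y, f z) \<in> (Q \<union> Q\<inverse>)\<^sup>*"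
  proof
    assume "(y, z) \<in> P\<inverse>"
    then show ?thesis using assms(2) equiv_closure_sym by (metis converseD)
  qed (rule assms(2))
  with step.IH show ?case by (rule rtrancl_trans)
qed simp

lemma equiv_closure_respects:
  assumes "(x, y) \<in> (P \<union> P\<inverse>)\<^sup>*" and "\<And>a b. (a, b) \<in> P \<Longrightarrow> f a = f b"
  shows "f x = f y"
  using assms(1)
proof (induction rule: rtrancl_induct)
  case (step y z)
  then show ?case using assms(2) by auto
qed simp

lemma equiv_equiv_closure: "equiv UNIV ((P \<union> P\<inverse>)\<^sup>*)"
  by (simp add: equiv_def refl_rtrancl sym_rtrancl[OF sym_Un_converse] trans_rtrancl)

lemma quotient_map_exists:
  assumes "finite V"
  shows "\<exists>h :: 'a \<Rightarrow> nat. quotient_map V P h"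
proof -
  let ?class = "\<lambda>x. (P \<union> P\<inverse>)\<^sup>* `` {x}"
  obtain f :: "'a set \<Rightarrow> nat" where f: "inj_on f (?class ` V)"
    using ex_bij_betw_finite_nat[OF finite_imageI[OF assms]] bij_betw_imp_inj_on by blast
  have class_eq: "?class x = ?class y \<longleftrightarrow> (x, y) \<in> (P \<union> P\<inverse>)\<^sup>*" for x y
    using equiv_class_eq_iff[OF equiv_equiv_closure] by (metis UNIV_I)
  have "quotient_map V P (f \<circ> ?class)"
    unfolding quotient_map_def
  proof (intro ballI)
    fix x y assume "x \<in> V" "y \<in> V"
    then have "f (?class x) = f (?class y) \<longleftrightarrow> ?class x = ?class y"
      by (intro inj_on_eq_iff[OF f]) simp_all
    then show "(f \<circ> ?class) x = (f \<circ> ?class) y \<longleftrightarrow> (x, y) \<in> (P \<union> P\<inverse>)\<^sup>*"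
      using class_eq by simp
  qed
  then show ?thesis by blast
qed

lemma quotient_map_empty_iff: "quotient_map V {} h \<longleftrightarrow> inj_on h V"
  unfolding quotient_map_def inj_on_def by auto

lemma quot_exists:
  assumes "finite (bV G)" and "P \<subseteq> bV G \<times> bV G"
  shows "\<exists>h :: 'a \<Rightarrow> nat. quot G P h (bgr_map h G)"
  using quotient_map_exists[OF assms(1)] assms(2) unfolding quot_iff by blast

lemma quot_related: "quot G P h H \<Longrightarrow> (x, y) \<in> P \<Longrightarrow> h x = h y"
  unfolding quot_iff quotient_map_def by blast

lemma quotient_map_comp:
  assumes PV: "P \<subseteq> V \<times> V" and QV: "Q \<subseteq> V \<times> V"
    and g: "quotient_map V P g"
    and h: "quotient_map (g ` V) ((\<lambda>(a, b). (g a, g b)) ` Q) h"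
  shows "quotient_map V (P \<union> Q) (h \<circ> g)"
proof -
  let ?R = "((P \<union> Q) \<union> (P \<union> Q)\<inverse>)\<^sup>*"
  let ?Q' = "(\<lambda>(a, b). (g a, g b)) ` Q"
  define \<rho> where "\<rho> = inv_into V g"
  have rep: "(x, \<rho> (g x)) \<in> ?R" if "x \<in> V" for x
  proof -
    have "\<rho> (g x) \<in> V" "g (\<rho> (g x)) = g x"
      using that by (simp_all add: \<rho>_def inv_into_into f_inv_into_f)
    then have "(x, \<rho> (g x)) \<in> (P \<union> P\<inverse>)\<^sup>*" using g that unfolding quotient_map_def by metis
    then show ?thesis by (rule rtrancl_mono[THEN subsetD, rotated]) blast
  qed
  show ?thesis
    unfolding quotient_map_def
  proof (intro ballI iffI)
    fix x y assume x: "x \<in> V" and y: "y \<in> V"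
    {
      assume "(h \<circ> g) x = (h \<circ> g) y"
      then have "(g x, g y) \<in> (?Q' \<union> ?Q'\<inverse>)\<^sup>*" using h x y unfolding quotient_map_def by simp
      then have "(\<rho> (g x), \<rho> (g y)) \<in> ?R"
      proof (rule equiv_closure_map)
        fix u v assume "(u, v) \<in> ?Q'"
        then obtain a b where ab: "(a, b) \<in> Q" "u = g a" "v = g b" by auto
        then have "a \<in> V" "b \<in> V" using QV by auto
        moreover have "(a, b) \<in> ?R" using ab(1) by blast
        ultimately show "(\<rho> u, \<rho> v) \<in> ?R"
          using rep ab(2,3) equiv_closure_sym by (meson rtrancl_trans)
      qed
      then show "(x, y) \<in> ?R" using rep[OF x] rep[OF y] equiv_closure_sym by (meson rtrancl_trans)
    }
    {
      assume "(x, y) \<in> ?R"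
      then show "(h \<circ> g) x = (h \<circ> g) y"
      proof (rule equiv_closure_respects)
        fix a b assume ab: "(a, b) \<in> P \<union> Q"
        then have a: "a \<in> V" and b: "b \<in> V" using PV QV by auto
        show "(h \<circ> g) a = (h \<circ> g) b"
        proof (cases "(a, b) \<in> P")
          case True
          then have "g a = g b" using g a b unfolding quotient_map_def by blast
          then show ?thesis by simp
        next
          case False
          then have "(g a, g b) \<in> ?Q'" using ab by force
          then have "(g a, g b) \<in> (?Q' \<union> ?Q'\<inverse>)\<^sup>*" by blast
          then show ?thesis using h a b unfolding quotient_map_def by simp
        qed
      qed
    }
  qed
qed

lemma quot_comp:
  assumes "quot X P g G" and "quot G ((\<lambda>(a, b). (g a, g b)) ` Q) h H" and "Q \<subseteq> bV X \<times> bV X"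
  shows "quot X (P \<union> Q) (h \<circ> g) H"
proof -
  have "P \<subseteq> bV X \<times> bV X" "quotient_map (bV X) P g" "G = bgr_map g X"
    using assms(1) unfolding quot_iff by blast+
  moreover from this(3) have "quotient_map (g ` bV X) ((\<lambda>(a, b). (g a, g b)) ` Q) h" "H = bgr_map h G"
    using assms(2) unfolding quot_iff by auto
  ultimately show ?thesis
    using quotient_map_comp[of P "bV X" Q g h] assms(3) unfolding quot_iff by (simp add: bgr_map_comp)
qed

lemma quot_iso_b:
  assumes "quot X P g G" and "iso_b G H"
  shows "\<exists>g'. quot X P g' H"
proof -
  obtain f where f: "inj_on f (bV G)" "H = bgr_map f G"
    using assms(2) unfolding iso_b_iff_bgr_map by blast
  have X: "P \<subseteq> bV X \<times> bV X" "G = bgr_map g X" "quotient_map (bV X) P g"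
    using assms(1) unfolding quot_iff by blast+
  have "quotient_map (bV X) P (f \<circ> g)"
    using X(3) inj_on_eq_iff[OF f(1)] unfolding quotient_map_def X(2) by simp
  then have "quot X P (f \<circ> g) H" using X f(2) unfolding quot_iff by (simp add: bgr_map_comp)
  then show ?thesis by blast
qed

text \<open>Computing a quotient of \<open>D\<close> through a part \<open>U\<close> of it: \<open>\<rho>\<close> moves every vertex of \<open>D\<close> within its
  \<open>P\<close>-class into the copy \<open>\<iota> ` U\<close>, and on \<open>U\<close> the relation \<open>P\<close> induces exactly \<open>R\<close>.\<close>

lemma quot_retract:
  assumes q: "quot D P h H"
    and \<iota>: "\<And>u. u \<in> U \<Longrightarrow> \<iota> u \<in> bV D \<and> \<rho> (\<iota> u) = u"
    and \<rho>: "\<And>x. x \<in> bV D \<Longrightarrow> \<rho> x \<in> U \<and> (x, \<iota> (\<rho> x)) \<in> (P \<union> P\<inverse>)\<^sup>*"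
    and P: "\<And>a b. (a, b) \<in> P \<Longrightarrow> (\<rho> a, \<rho> b) \<in> (R \<union> R\<inverse>)\<^sup>*"
    and R: "\<And>a b. (a, b) \<in> R \<Longrightarrow> (\<iota> a, \<iota> b) \<in> (P \<union> P\<inverse>)\<^sup>*"
  shows "quotient_map U R (h \<circ> \<iota>)" and "bV H = (h \<circ> \<iota>) ` U"
proof -
  have H: "bV H = h ` bV D" and ker: "quotient_map (bV D) P h"
    using q unfolding quot_iff by simp_all
  show "quotient_map U R (h \<circ> \<iota>)"
    unfolding quotient_map_def
  proof (intro ballI)
    fix u v assume u: "u \<in> U" and v: "v \<in> U"
    have "(\<iota> u, \<iota> v) \<in> (P \<union> P\<inverse>)\<^sup>* \<Longrightarrow> (u, v) \<in> (R \<union> R\<inverse>)\<^sup>*"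
      using equiv_closure_map[of "\<iota> u" "\<iota> v" P \<rho> R] P \<iota> u v by simp
    moreover have "(u, v) \<in> (R \<union> R\<inverse>)\<^sup>* \<Longrightarrow> (\<iota> u, \<iota> v) \<in> (P \<union> P\<inverse>)\<^sup>*"
      using equiv_closure_map[of u v R \<iota> P] R by simp
    moreover have "(h \<circ> \<iota>) u = (h \<circ> \<iota>) v \<longleftrightarrow> (\<iota> u, \<iota> v) \<in> (P \<union> P\<inverse>)\<^sup>*"
      using ker \<iota>[OF u] \<iota>[OF v] unfolding quotient_map_def by simp
    ultimately show "(h \<circ> \<iota>) u = (h \<circ> \<iota>) v \<longleftrightarrow> (u, v) \<in> (R \<union> R\<inverse>)\<^sup>*"
      by blast
  qed
  show "bV H = (h \<circ> \<iota>) ` U"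
    unfolding H
  proof (intro subset_antisym subsetI)
    fix y assume "y \<in> h ` bV D"
    then obtain x where x: "x \<in> bV D" "y = h x" by blast
    then have "\<rho> x \<in> U" "\<iota> (\<rho> x) \<in> bV D" "(x, \<iota> (\<rho> x)) \<in> (P \<union> P\<inverse>)\<^sup>*"
      using \<rho> \<iota> by blast+
    then have "y = (h \<circ> \<iota>) (\<rho> x)" using ker x unfolding quotient_map_def by simp
    with \<open>\<rho> x \<in> U\<close> show "y \<in> (h \<circ> \<iota>) ` U" by blast
  next
    fix y assume "y \<in> (h \<circ> \<iota>) ` U"
    then show "y \<in> h ` bV D" using \<iota> by auto
  qed
qed

lemma quotient_maps_iso_b:
  assumes "wf_bgr k G" and h: "quotient_map (bV G) P h" and h': "quotient_map (bV G) P h'"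
  shows "iso_b (bgr_map h G) (bgr_map h' G)"
proof -
  define f where "f = h' \<circ> inv_into (bV G) h"
  have fh: "f (h x) = h' x" if "x \<in> bV G" for x
  proof -
    have "inv_into (bV G) h (h x) \<in> bV G" "h (inv_into (bV G) h (h x)) = h x"
      using that by (simp_all add: inv_into_into f_inv_into_f)
    then show ?thesis using h h' that unfolding f_def quotient_map_def by simp
  qed
  have "inj_on f (h ` bV G)"
    using fh h h' unfolding quotient_map_def by (auto intro!: inj_onI)
  moreover have "bgr_map h' G = bgr_map f (bgr_map h G)"
    unfolding bgr_map_comp using fh by (intro bgr_map_cong[OF assms(1)]) simp
  ultimately show ?thesis unfolding iso_b_iff_bgr_map by auto
qed

lemma iso_b_underlying: "iso_b G H \<Longrightarrow> iso_u (underlying G) (underlying H)"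
  unfolding iso_b_def iso_u_def underlying_def by auto

lemma wf_bgr_edge_update: "wf_bgr k G \<Longrightarrow> E \<subseteq> bE G \<Longrightarrow> wf_bgr k (G\<lparr>bE := E\<rparr>)"
  unfolding wf_bgr_def by auto

lemma wf_bgr_minor_step:
  assumes "wf_bgr k H" and "del_edge H H' \<or> del_vertex H H' \<or> contract H H'"
  shows "wf_bgr k H'"
  using assms(2)
proof (elim disjE)
  assume "del_edge H H'"
  then show ?thesis using wf_bgr_edge_update[OF assms(1)] unfolding del_edge_def by auto
next
  assume "del_vertex H H'"
  then obtain v where v: "v \<notin> set (bin H)" "v \<notin> set (bout H)"
    "H' = H\<lparr>bV := bV H - {v}, bE := {e\<in>bE H. v \<notin> e}\<rparr>"
    unfolding del_vertex_def by blast
  with assms(1) show ?thesis unfolding wf_bgr_def by auto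
next
  assume "contract H H'"
  then obtain e h P where "quot (H\<lparr>bE := bE H - {e}\<rparr>) P h H'" unfolding contract_def by blast
  then have "H' = bgr_map h (H\<lparr>bE := bE H - {e}\<rparr>)" unfolding quot_iff by blast
  moreover have "wf_bgr k (H\<lparr>bE := bE H - {e}\<rparr>)" using wf_bgr_edge_update[OF assms(1)] by auto
  ultimately show ?thesis using wf_bgr_map by metis
qed

lemma wf_bgr_bminor: "bminor G H \<Longrightarrow> wf_bgr k G \<Longrightarrow> wf_bgr k H"
  by (induction rule: bminor.induct) (use wf_bgr_iso_b wf_bgr_minor_step in blast)+

lemma card_doubleton_le: "card {a, b} \<le> 2"
  by (simp add: card_insert_le_m1)

lemma wf_Ck: "wf_bgr k (Ck k)"
proof -
  have "\<forall>e\<in>bE (Ck k). e \<noteq> {} \<and> e \<subseteq> {0..<2*k} \<and> card e \<le> 2"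
  proof
    fix e assume "e \<in> bE (Ck k)"
    then have "(\<exists>i. e = {i, i+1} \<and> (i < k - 1 \<or> (k \<le> i \<and> i < 2*k - 1)))
        \<or> (k \<ge> 1 \<and> (e = {0, k} \<or> e = {k - 1, 2*k - 1}))"
      unfolding Ck_def by (auto split: if_splits)
    then show "e \<noteq> {} \<and> e \<subseteq> {0..<2*k} \<and> card e \<le> 2" using card_doubleton_le by auto
  qed
  then show ?thesis unfolding wf_bgr_def by (simp add: Ck_def)
qed

lemma wf_Mk: "wf_bgr k (Mk k)"
  unfolding wf_bgr_def Mk_def using card_doubleton_le by auto

lemma wf_dunion_edges:
  assumes "wf_bgr k F" and "wf_bgr k F'"
  shows "\<forall>e\<in>(\<lambda>e. Inl ` e) ` bE F \<union> (\<lambda>e. Inr ` e) ` bE F'.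
    e \<noteq> {} \<and> e \<subseteq> Inl ` bV F \<union> Inr ` bV F' \<and> card e \<le> 2"
proof -
  have "\<forall>e\<in>bE F. e \<noteq> {} \<and> e \<subseteq> bV F \<and> card e \<le> 2" "\<forall>e\<in>bE F'. e \<noteq> {} \<and> e \<subseteq> bV F' \<and> card e \<le> 2"
    using assms unfolding wf_bgr_def by blast+
  then show ?thesis by (fastforce simp: card_image)
qed

lemma wf_dunion_ser: "wf_bgr k F \<Longrightarrow> wf_bgr k F' \<Longrightarrow> wf_bgr k (dunion_ser F F')"
  using wf_dunion_edges[of k F F'] unfolding wf_bgr_def dunion_ser_def by auto

lemma wf_dunion_par: "wf_bgr k F \<Longrightarrow> wf_bgr k F' \<Longrightarrow> wf_bgr k (dunion_par F F')"
  using wf_dunion_edges[of k F F'] unfolding wf_bgr_def dunion_par_def by auto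

lemma set_zip_subset: "set xs \<subseteq> A \<Longrightarrow> set ys \<subseteq> B \<Longrightarrow> set (zip xs ys) \<subseteq> A \<times> B"
  by (auto dest: set_zip_leftD set_zip_rightD)

lemma mem_set_zip_map:
  "(x, y) \<in> set (zip (map f xs) (map g ys)) \<longleftrightarrow>
     (\<exists>i. i < length xs \<and> i < length ys \<and> x = f (xs ! i) \<and> y = g (ys ! i))"
  by (auto simp: set_zip) (metis nth_map)

lemma series_exists:
  assumes "wf_bgr k F" and "wf_bgr k F'"
  shows "\<exists>H :: nat bgr. series F F' H"
proof -
  have "wf_bgr k (dunion_ser F F')" using assms by (rule wf_dunion_ser)
  moreover have "set (zip (map Inl (bout F)) (map Inr (bin F')))
      \<subseteq> bV (dunion_ser F F') \<times> bV (dunion_ser F F')"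
    using assms by (intro set_zip_subset) (auto simp: wf_bgr_def dunion_ser_def)
  ultimately show ?thesis unfolding series_def wf_bgr_def by (metis quot_exists)
qed

lemma parallel_exists:
  assumes "wf_bgr k F" and "wf_bgr k F'"
  shows "\<exists>H :: nat bgr. parallel F F' H"
proof -
  have "wf_bgr k (dunion_par F F')" using assms by (rule wf_dunion_par)
  moreover have "set (zip (map Inl (bin F)) (map Inr (bin F'))) \<union> set (zip (map Inl (bout F)) (map Inr (bout F')))
      \<subseteq> bV (dunion_par F F') \<times> bV (dunion_par F F')"
    using assms by (intro Un_least set_zip_subset) (auto simp: wf_bgr_def dunion_par_def)
  ultimately show ?thesis unfolding parallel_def wf_bgr_def by (metis quot_exists)
qed

lemma wf_series: "wf_bgr k F \<Longrightarrow> wf_bgr k F' \<Longrightarrow> series F F' H \<Longrightarrow> wf_bgr k H"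
  unfolding series_def quot_iff using wf_dunion_ser wf_bgr_map by metis

lemma wf_parallel: "wf_bgr k F \<Longrightarrow> wf_bgr k F' \<Longrightarrow> parallel F F' H \<Longrightarrow> wf_bgr k H"
  unfolding parallel_def quot_iff using wf_dunion_par wf_bgr_map by metis

lemma rot_less:
  assumes "0 < k"
  shows "rot k r i < 2 * k"
proof -
  have "(cyc_pos k i + r) mod (2*k) < 2 * k" using assms by simp
  then have "(cyc_pos k i + r) mod (2*k) < length (cyc_seq k)" by (simp add: cyc_seq_def)
  then have "rot k r i \<in> set (cyc_seq k)" unfolding rot_def by (rule nth_mem)
  then show ?thesis by (auto simp: cyc_seq_def)
qed

lemma wf_bperm_rot:
  assumes "wf_bgr k F"
  shows "wf_bgr k (bperm (rot k r) k F)"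
proof (cases "k = 0")
  case True
  then show ?thesis using assms unfolding wf_bgr_def bperm_def by simp
next
  case False
  let ?w = "bin F @ bout F"
  have "length ?w = 2 * k" "set ?w \<subseteq> bV F" using assms unfolding wf_bgr_def by simp_all
  then have "?w ! rot k r i \<in> bV F" for i
    using rot_less[of k r i] False by (metis nth_mem subsetD gr0I)
  then show ?thesis using assms unfolding wf_bgr_def bperm_def Let_def by auto
qed

lemma PP_wf_bgr: "F \<in> PP k \<Longrightarrow> wf_bgr k F"
proof (induction rule: PP.induct)
  case (PP_base Q)
  then show ?case using wf_bgr_bminor wf_Ck wf_Mk unfolding QP_def QS_def by blast
next
  case (PP_series F F' H)
  then show ?case using wf_series by blast
next
  case (PP_parallel F Q H)
  then show ?case using wf_parallel wf_bgr_bminor wf_Ck unfolding QP_def by blast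
next
  case (PP_perm F r)
  then show ?case using wf_bperm_rot by blast
qed

section \<open>Reversal\<close>

lemma bstar_simps [simp]:
  "bV (bstar G) = bV G" "bE (bstar G) = bE G" "bin (bstar G) = bout G" "bout (bstar G) = bin G"
  by (simp_all add: bstar_def)

lemma bstar_bstar [simp]: "bstar (bstar G) = G"
  by (simp add: bstar_def)

lemma bstar_bgr_map: "bstar (bgr_map h G) = bgr_map h (bstar G)"
  by (rule bgr_eqI) simp_all

lemma bstar_edge_update: "bstar (H\<lparr>bE := E\<rparr>) = (bstar H)\<lparr>bE := E\<rparr>"
  by (simp add: bstar_def)

lemma quot_bstar: "quot G P h H \<Longrightarrow> quot (bstar G) P h (bstar H)"
  unfolding quot_iff by (simp add: bstar_bgr_map)

lemma iso_b_bstar: "iso_b G H \<Longrightarrow> iso_b (bstar G) (bstar H)"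
  unfolding iso_b_iff_bgr_map by (metis bstar_bgr_map bstar_simps(1))

lemma minor_step_bstar:
  assumes "del_edge H H' \<or> del_vertex H H' \<or> contract H H'"
  shows "del_edge (bstar H) (bstar H') \<or> del_vertex (bstar H) (bstar H') \<or> contract (bstar H) (bstar H')"
  using assms
proof (elim disjE)
  assume "del_edge H H'"
  then obtain e where "e \<in> bE H" "H' = H\<lparr>bE := bE H - {e}\<rparr>" unfolding del_edge_def by blast
  then have "del_edge (bstar H) (bstar H')"
    unfolding del_edge_def by (metis bstar_edge_update bstar_simps(2))
  then show ?thesis by blast
next
  assume "del_vertex H H'"
  then obtain v where v: "v \<in> bV H" "v \<notin> set (bin H)" "v \<notin> set (bout H)"
    "H' = H\<lparr>bV := bV H - {v}, bE := {e\<in>bE H. v \<notin> e}\<rparr>" unfolding del_vertex_def by blast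
  have "bstar H' = (bstar H)\<lparr>bV := bV (bstar H) - {v}, bE := {e\<in>bE (bstar H). v \<notin> e}\<rparr>"
    using v(4) by (intro bgr_eqI) simp_all
  then have "del_vertex (bstar H) (bstar H')" unfolding del_vertex_def using v(1-3) by auto
  then show ?thesis by blast
next
  assume "contract H H'"
  then obtain e h where e: "e \<in> bE H" and q: "quot (H\<lparr>bE := bE H - {e}\<rparr>) {(x, y). e = {x, y}} h H'"
    unfolding contract_def by blast
  have "quot ((bstar H)\<lparr>bE := bE (bstar H) - {e}\<rparr>) {(x, y). e = {x, y}} h (bstar H')"
    using quot_bstar[OF q] by (simp only: bstar_edge_update bstar_simps(2))
  then have "contract (bstar H) (bstar H')" unfolding contract_def using e by auto
  then show ?thesis by blast
qed

lemma bminor_bstar: "bminor G H \<Longrightarrow> bminor (bstar G) (bstar H)"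
proof (induction rule: bminor.induct)
  case (minor_iso H)
  then show ?case by (simp add: iso_b_bstar bminor.minor_iso)
next
  case (minor_step H H')
  then show ?case using minor_step_bstar bminor.minor_step by blast
qed

lemma bminor_iso_b_left: "bminor G H \<Longrightarrow> iso_b G' G \<Longrightarrow> bminor G' H"
proof (induction rule: bminor.induct)
  case (minor_iso H)
  then show ?case using iso_b_trans bminor.minor_iso by blast
next
  case (minor_step H H')
  then show ?case using bminor.minor_step by blast
qed

text \<open>Exchanging vertex \<open>i\<close> with \<open>i + k\<close> swaps the in- and out-labels of \<open>C\<^sub>k\<close> and \<open>M\<^sub>k\<close>
  and preserves the edges.\<close>

definition swap_sides :: "nat \<Rightarrow> nat \<Rightarrow> nat" where
  "swap_sides k i = (if i < k then i + k else i - k)"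

lemma swap_sides_involution: "i < 2 * k \<Longrightarrow> swap_sides k i < 2 * k \<and> swap_sides k (swap_sides k i) = i"
  by (auto simp: swap_sides_def)

lemma iso_b_bstar_by_involution:
  assumes wf: "wf_bgr k G"
    and inv: "\<And>x. x \<in> bV G \<Longrightarrow> \<sigma> x \<in> bV G \<and> \<sigma> (\<sigma> x) = x"
    and edges: "\<And>e. e \<in> bE G \<Longrightarrow> \<sigma> ` e \<in> bE G"
    and labels: "map \<sigma> (bin G) = bout G" "map \<sigma> (bout G) = bin G"
  shows "iso_b G (bstar G)"
proof -
  have EV: "\<And>e. e \<in> bE G \<Longrightarrow> e \<subseteq> bV G" using wf unfolding wf_bgr_def by blast
  have "\<sigma> ` \<sigma> ` e = e" if "e \<in> bE G" for e
    using inv EV[OF that] by (force simp: image_comp)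
  then have E: "(\<lambda>e. \<sigma> ` e) ` bE G = bE G" using edges by (metis image_eqI subsetI subset_antisym image_subsetI)
  have V: "\<sigma> ` bV G = bV G" using inv by (metis image_eqI subsetI subset_antisym image_subsetI)
  have "inj_on \<sigma> (bV G)" using inv by (metis inj_onI)
  moreover have "bstar G = bgr_map \<sigma> G" by (rule bgr_eqI) (simp_all add: V E labels)
  ultimately show ?thesis unfolding iso_b_iff_bgr_map by blast
qed

lemma map_swap_sides: "map (swap_sides k) [0..<k] = [k..<2*k]" "map (swap_sides k) [k..<2*k] = [0..<k]"
  by (auto intro: nth_equalityI simp: swap_sides_def)

lemma iso_b_Ck_bstar: "iso_b (Ck k) (bstar (Ck k))"
proof (rule iso_b_bstar_by_involution[OF wf_Ck])
  fix e assume "e \<in> bE (Ck k)"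
  then have "(\<exists>i. e = {i, i+1} \<and> i < k - 1) \<or> (\<exists>i. e = {i, i+1} \<and> k \<le> i \<and> i < 2*k - 1)
      \<or> (k \<ge> 1 \<and> (e = {0, k} \<or> e = {k - 1, 2*k - 1}))"
    unfolding Ck_def by (auto split: if_splits)
  then show "swap_sides k ` e \<in> bE (Ck k)"
  proof (elim disjE exE conjE)
    fix i assume "e = {i, i+1}" "i < k - 1"
    then have "swap_sides k ` e = {i + k, (i + k) + 1} \<and> k \<le> i + k \<and> i + k < 2*k - 1"
      by (auto simp: swap_sides_def)
    then show ?thesis unfolding Ck_def by auto
  next
    fix i assume "e = {i, i+1}" "k \<le> i" "i < 2*k - 1"
    then have "swap_sides k ` e = {i - k, (i - k) + 1} \<and> i - k < k - 1"
      by (auto simp: swap_sides_def)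
    then show ?thesis unfolding Ck_def by auto
  next
    assume "1 \<le> k" "e = {0, k}"
    then show ?thesis using \<open>e \<in> bE (Ck k)\<close> by (auto simp: swap_sides_def)
  next
    assume "1 \<le> k" "e = {k - 1, 2*k - 1}"
    then have "swap_sides k ` e = e" by (auto simp: swap_sides_def)
    then show ?thesis using \<open>e \<in> bE (Ck k)\<close> by simp
  qed
qed (auto simp: Ck_def swap_sides_involution map_swap_sides)

lemma iso_b_Mk_bstar: "iso_b (Mk k) (bstar (Mk k))"
proof (rule iso_b_bstar_by_involution[OF wf_Mk])
  fix e assume "e \<in> bE (Mk k)"
  then obtain i where i: "e = {i, i + k}" "i < k" unfolding Mk_def by auto
  then have "swap_sides k ` e = e" by (auto simp: swap_sides_def)
  then show "swap_sides k ` e \<in> bE (Mk k)" using \<open>e \<in> bE (Mk k)\<close> by simp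
qed (auto simp: Mk_def swap_sides_involution map_swap_sides)

lemma QP_bstar: "Q \<in> QP k \<Longrightarrow> bstar Q \<in> QP k"
  unfolding QP_def using bminor_bstar bminor_iso_b_left iso_b_Ck_bstar by blast

lemma QS_bstar: "Q \<in> QS k \<Longrightarrow> bstar Q \<in> QS k"
  unfolding QS_def using bminor_bstar bminor_iso_b_left iso_b_Mk_bstar by blast

lemma parallel_bstar: "parallel F Q H \<Longrightarrow> parallel (bstar F) (bstar Q) (bstar H)"
proof -
  assume "parallel F Q H"
  then obtain h where "quot (dunion_par F Q) (set (zip (map Inl (bin F)) (map Inr (bin Q)))
      \<union> set (zip (map Inl (bout F)) (map Inr (bout Q)))) h H"
    unfolding parallel_def by blast
  moreover have "bstar (dunion_par F Q) = dunion_par (bstar F) (bstar Q)"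
    by (rule bgr_eqI) (simp_all add: dunion_par_def)
  ultimately show ?thesis unfolding parallel_def using quot_bstar by (fastforce simp: Un_commute)
qed

text \<open>The pairs are flipped so that, after the two factors of a series composition are swapped,
  they match the orientation in \<^const>\<open>series\<close>; the generated equivalence is unchanged.\<close>

lemma quot_rename:
  assumes q: "quot G P h H" and inv: "\<And>x. \<tau> (\<sigma> x) = x" "\<And>y. \<sigma> (\<tau> y) = y"
  shows "quot (bgr_map \<sigma> G) ((\<lambda>(a, b). (\<sigma> b, \<sigma> a)) ` P) (h \<circ> \<tau>) H"
proof -
  let ?P' = "(\<lambda>(a, b). (\<sigma> b, \<sigma> a)) ` P"
  have PV: "P \<subseteq> bV G \<times> bV G" and H: "H = bgr_map h G" and ker: "quotient_map (bV G) P h"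
    using q unfolding quot_iff by blast+
  have "\<tau> \<circ> \<sigma> = id" using inv by (simp add: fun_eq_iff)
  then have "bgr_map (h \<circ> \<tau>) (bgr_map \<sigma> G) = H"
    unfolding H bgr_map_comp by (metis comp_assoc comp_id)
  moreover have "?P' \<subseteq> bV (bgr_map \<sigma> G) \<times> bV (bgr_map \<sigma> G)" using PV by auto
  moreover have "(x, y) \<in> (P \<union> P\<inverse>)\<^sup>* \<longleftrightarrow> (\<sigma> x, \<sigma> y) \<in> (?P' \<union> ?P'\<inverse>)\<^sup>*" for x y
  proof
    assume "(x, y) \<in> (P \<union> P\<inverse>)\<^sup>*"
    then show "(\<sigma> x, \<sigma> y) \<in> (?P' \<union> ?P'\<inverse>)\<^sup>*" by (rule equiv_closure_map) force
  next
    assume "(\<sigma> x, \<sigma> y) \<in> (?P' \<union> ?P'\<inverse>)\<^sup>*"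
    then have "(\<tau> (\<sigma> x), \<tau> (\<sigma> y)) \<in> (P \<union> P\<inverse>)\<^sup>*" by (rule equiv_closure_map) (auto simp: inv)
    then show "(x, y) \<in> (P \<union> P\<inverse>)\<^sup>*" by (simp add: inv)
  qed
  then have "quotient_map (bV (bgr_map \<sigma> G)) ?P' (h \<circ> \<tau>)"
    using ker unfolding quotient_map_def by (auto simp: inv)
  ultimately show ?thesis unfolding quot_iff by blast
qed

lemma series_bstar:
  assumes "series F F' H"
  shows "series (bstar F') (bstar F) (bstar H)"
proof -
  let ?\<sigma> = "case_sum Inr Inl :: 'a + 'b \<Rightarrow> 'b + 'a"
  let ?P = "set (zip (map Inl (bout F)) (map Inr (bin F')))"
  obtain h where "quot (dunion_ser F F') ?P h H" using assms unfolding series_def by blast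
  then have "quot (bgr_map ?\<sigma> (bstar (dunion_ser F F'))) ((\<lambda>(a, b). (?\<sigma> b, ?\<sigma> a)) ` ?P)
      (h \<circ> case_sum Inr Inl) (bstar H)"
    by (intro quot_rename quot_bstar) (simp_all split: sum.split)
  moreover have "bgr_map ?\<sigma> (bstar (dunion_ser F F')) = dunion_ser (bstar F') (bstar F)"
    by (rule bgr_eqI) (auto simp: dunion_ser_def image_image image_Un)
  moreover have "(\<lambda>(a, b). (?\<sigma> b, ?\<sigma> a)) ` ?P = set (zip (map Inl (bout (bstar F'))) (map Inr (bin (bstar F))))"
  proof -
    have "(\<lambda>(a, b). (?\<sigma> b, ?\<sigma> a)) ` ?P = (\<lambda>(a, b). (Inl b, Inr a)) ` set (zip (bout F) (bin F'))"
      by (simp add: zip_map_map image_image case_prod_beta)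
    also have "\<dots> = (\<lambda>(a, b). (Inl a, Inr b)) ` set (zip (bin F') (bout F))"
      by (subst zip_commute) (simp add: image_image case_prod_beta)
    finally show ?thesis by (simp add: zip_map_map)
  qed
  ultimately show ?thesis unfolding series_def by metis
qed

lemma mod_reflect:
  fixes n c r :: nat
  assumes "c < n"
  shows "(n - 1 - c + r) mod n = n - 1 - (c + (n - r mod n)) mod n"
proof -
  let ?s = "r mod n"
  have s: "?s < n" using assms by simp
  have "(n - 1 - c + r) mod n = (n - 1 - c + ?s) mod n" by (simp add: mod_add_right_eq)
  also have "\<dots> = n - 1 - (c + (n - ?s)) mod n"
  proof (cases "c < ?s")
    case True
    have "n - 1 - c + ?s = (?s - c - 1) + n" "(?s - c - 1) mod n = ?s - c - 1"
      "(c + (n - ?s)) mod n = c + (n - ?s)" "n - 1 - (c + (n - ?s)) = ?s - c - 1"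
      using True assms s by simp_all
    then show ?thesis by (simp only: mod_add_self2)
  next
    case False
    have "c + (n - ?s) = (c - ?s) + n" "(c - ?s) mod n = c - ?s"
      "(n - 1 - c + ?s) mod n = n - 1 - c + ?s" "n - 1 - (c - ?s) = n - 1 - c + ?s"
      using False assms s by simp_all
    then show ?thesis by (simp only: mod_add_self2)
  qed
  finally show ?thesis .
qed

text \<open>Label position \<open>p\<close> of \<open>bstar F\<close> is position \<open>swap_sides k p\<close> of \<open>F\<close>; this reflection of the
  cyclic order conjugates the rotation by \<open>r\<close> into the rotation by \<open>-r\<close>.\<close>

lemma cyc_seq_nth: "c < 2 * k \<Longrightarrow> cyc_seq k ! c = (if c < k then c else 3 * k - 1 - c)"
proof (cases "c < k")
  case False
  assume c: "c < 2 * k"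
  have "rev [k..<2*k] ! (c - k) = [k..<2*k] ! (k - Suc (c - k))"
    using False c by (subst rev_nth) auto
  also have "\<dots> = 3 * k - 1 - c" using False c by simp
  finally show ?thesis using False by (simp add: cyc_seq_def nth_append)
qed (simp add: cyc_seq_def nth_append)

lemma swap_sides_cyc_seq: "c < 2 * k \<Longrightarrow> swap_sides k (cyc_seq k ! c) = cyc_seq k ! (2 * k - 1 - c)"
  by (simp add: cyc_seq_nth swap_sides_def) arith

lemma rot_swap_sides:
  assumes "0 < k" and "p < 2 * k"
  shows "rot k r (swap_sides k p) = swap_sides k (rot k (2 * k - r mod (2 * k)) p)"
proof -
  have pos: "cyc_pos k (swap_sides k p) = 2 * k - 1 - cyc_pos k p" "cyc_pos k p < 2 * k"
    using assms by (auto simp: cyc_pos_def swap_sides_def)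
  let ?c = "(cyc_pos k p + (2 * k - r mod (2 * k))) mod (2 * k)"
  have "rot k r (swap_sides k p) = cyc_seq k ! (2 * k - 1 - ?c)"
    unfolding rot_def pos(1) mod_reflect[OF pos(2)] ..
  also have "\<dots> = swap_sides k (cyc_seq k ! ?c)"
    using assms by (simp add: swap_sides_cyc_seq)
  finally show ?thesis unfolding rot_def .
qed

lemma bperm_rot_bstar:
  assumes "wf_bgr k F"
  shows "bstar (bperm (rot k r) k F) = bperm (rot k (2 * k - r mod (2 * k))) k (bstar F)"
proof (cases "k = 0")
  case True
  then show ?thesis by (intro bgr_eqI) (simp_all add: bperm_def)
next
  case False
  let ?r' = "2 * k - r mod (2 * k)"
  have len: "length (bin F) = k" "length (bout F) = k" using assms unfolding wf_bgr_def by simp_all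
  have w: "(bout F @ bin F) ! rot k ?r' p = (bin F @ bout F) ! rot k r (swap_sides k p)"
    if "p < 2 * k" for p
    using rot_swap_sides[OF _ that, of r] rot_less[of k ?r' p] False len
    by (auto simp: swap_sides_def nth_append)
  have "map (\<lambda>i. (bin F @ bout F) ! rot k r i) [k..<2*k] = map (\<lambda>i. (bout F @ bin F) ! rot k ?r' i) [0..<k]"
    "map (\<lambda>i. (bin F @ bout F) ! rot k r i) [0..<k] = map (\<lambda>i. (bout F @ bin F) ! rot k ?r' i) [k..<2*k]"
    by (auto intro!: nth_equalityI simp: w swap_sides_def add.commute)
  then show ?thesis by (intro bgr_eqI) (simp_all add: bperm_def Let_def)
qed

lemma PP_bstar: "F \<in> PP k \<Longrightarrow> bstar F \<in> PP k"
proof (induction rule: PP.induct)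
  case (PP_base Q)
  then show ?case using QP_bstar QS_bstar PP.PP_base by blast
next
  case (PP_series F F' H)
  then show ?case using series_bstar PP.PP_series by blast
next
  case (PP_parallel F Q H)
  then show ?case using parallel_bstar QP_bstar PP.PP_parallel by blast
next
  case (PP_perm F r)
  then show ?case using bperm_rot_bstar PP_wf_bgr PP.PP_perm by metis
qed

section \<open>Minors of \<open>C\<^sub>k\<close> and \<open>M\<^sub>k\<close>\<close>

lemma bminor_refl: "bminor G G"
  by (rule bminor.minor_iso[OF iso_b_refl])

lemma bminor_restrict_edges:
  assumes "bminor G H" and "finite (bE H)" and "D \<subseteq> bE H"
  shows "bminor G (H\<lparr>bE := D\<rparr>)"
proof -
  have remove: "bminor G (H\<lparr>bE := bE H - F\<rparr>)" if "finite F" "F \<subseteq> bE H" for F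
    using that
  proof (induction rule: finite_induct)
    case empty
    have "H\<lparr>bE := bE H - {}\<rparr> = H" by simp
    then show ?case using assms(1) by simp
  next
    case (insert e F)
    let ?H = "H\<lparr>bE := bE H - F\<rparr>"
    have IH: "bminor G ?H" using insert by simp
    have "e \<in> bE ?H" using insert by simp
    moreover have "bE H - insert e F = bE H - F - {e}" by blast
    then have "H\<lparr>bE := bE H - insert e F\<rparr> = ?H\<lparr>bE := bE ?H - {e}\<rparr>" by simp
    ultimately have "del_edge ?H (H\<lparr>bE := bE H - insert e F\<rparr>)"
      unfolding del_edge_def by (intro bexI[of _ e])
    then show ?case using bminor.minor_step[OF IH] by blast
  qed
  have "bminor G (H\<lparr>bE := bE H - (bE H - D)\<rparr>)" using assms(2) by (intro remove) auto
  moreover have "bE H - (bE H - D) = D" using assms(3) by blast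
  ultimately show ?thesis by simp
qed

lemma bminor_contract_edge:
  assumes m: "bminor G H" and e: "{a, b} \<in> bE H" and ab: "a \<noteq> b" and "a \<in> bV H" "b \<in> bV H"
  shows "bminor G (bgr_map (id(b := a)) (H\<lparr>bE := bE H - {{a, b}}\<rparr>))"
proof -
  let ?H = "H\<lparr>bE := bE H - {{a, b}}\<rparr>"
  let ?P = "{(x, y). {a, b} = {x, y}}"
  have P: "?P = {(a, b), (b, a)}" by (auto simp: doubleton_eq_iff)
  have "quotient_map (bV ?H) ?P (id(b := a))"
    unfolding quotient_map_def
  proof (intro ballI iffI)
    fix x y assume "(id(b := a)) x = (id(b := a)) y"
    then have "x = y \<or> (x, y) \<in> ?P" using ab by (auto split: if_splits)
    then show "(x, y) \<in> (?P \<union> ?P\<inverse>)\<^sup>*" by blast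
  next
    fix x y assume "(x, y) \<in> (?P \<union> ?P\<inverse>)\<^sup>*"
    then show "(id(b := a)) x = (id(b := a)) y"
      by (rule equiv_closure_respects) (auto simp: P)
  qed
  moreover have "?P \<subseteq> bV ?H \<times> bV ?H" using P assms(4,5) by auto
  ultimately have "quot ?H ?P (id(b := a)) (bgr_map (id(b := a)) ?H)"
    unfolding quot_iff by blast
  then have "contract H (bgr_map (id(b := a)) ?H)" unfolding contract_def using e by blast
  then show ?thesis using bminor.minor_step[OF m] by blast
qed

lemma image_id_upd_eq: "b \<notin> S \<Longrightarrow> id(b := a) ` S = S"
  by (auto simp: image_iff)

lemma image_id_upd_contract: "a \<in> S \<Longrightarrow> b \<in> S \<Longrightarrow> a \<noteq> b \<Longrightarrow> id(b := a) ` S = S - {b}"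
  by (auto simp: image_iff)

lemma edges_id_upd_eq: "(\<And>e. e \<in> E \<Longrightarrow> b \<notin> e) \<Longrightarrow> (\<lambda>e. id(b := a) ` e) ` E = E"
  using image_id_upd_eq by (metis (no_types, lifting) image_cong image_ident)

lemma map_id_upd_eq: "b \<notin> set xs \<Longrightarrow> map (id(b := a)) xs = xs"
  by (rule map_idI) auto

lemma finite_bE: "wf_bgr k G \<Longrightarrow> finite (bE G)"
  unfolding wf_bgr_def by (meson Pow_iff finite_Pow_iff finite_subset subsetI)

text \<open>\<open>M\<^sub>k\<close> with its edges \<open>{i, i + k}\<close> for \<open>i < j\<close> contracted, those for \<open>j \<le> i < m\<close> kept and the
  others deleted.\<close>

definition Mk_contracted :: "nat \<Rightarrow> nat \<Rightarrow> nat \<Rightarrow> nat bgr" where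
  "Mk_contracted k m j = \<lparr>bV = {0..<2*k} - {k..<k+j}, bE = {{i, i+k} | i. j \<le> i \<and> i < m},
     bin = [0..<k], bout = [0..<j] @ [k+j..<2*k]\<rparr>"

lemma Mk_contracted_Suc:
  assumes j: "j < m" and mk: "m \<le> k"
  shows "bgr_map (id(j + k := j)) ((Mk_contracted k m j)\<lparr>bE := bE (Mk_contracted k m j) - {{j, j+k}}\<rparr>)
    = Mk_contracted k m (Suc j)"
    (is "bgr_map ?f (?H\<lparr>bE := _\<rparr>) = ?H'")
proof (rule bgr_eqI)
  have ab: "j \<noteq> j + k" and a: "j \<in> bV ?H" and b: "j + k \<in> bV ?H"
    using j mk by (simp_all add: Mk_contracted_def)
  have "bV (bgr_map ?f (?H\<lparr>bE := bE ?H - {{j, j+k}}\<rparr>)) = bV ?H - {j + k}"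
    using image_id_upd_contract[OF a b ab] by simp
  also have "\<dots> = bV ?H'" by (auto simp: Mk_contracted_def)
  finally show "bV (bgr_map ?f (?H\<lparr>bE := bE ?H - {{j, j+k}}\<rparr>)) = bV ?H'" .
  have "bE ?H - {{j, j+k}} = bE ?H'"
  proof (intro subset_antisym subsetI)
    fix e assume "e \<in> bE ?H - {{j, j+k}}"
    then obtain i where "e = {i, i+k}" "j \<le> i" "i < m" "e \<noteq> {j, j+k}" by (auto simp: Mk_contracted_def)
    then show "e \<in> bE ?H'" unfolding Mk_contracted_def by (auto simp: le_less)
  next
    fix e assume "e \<in> bE ?H'"
    then obtain i where i: "e = {i, i+k}" "Suc j \<le> i" "i < m" by (auto simp: Mk_contracted_def)
    then have "e \<noteq> {j, j+k}" using mk by auto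
    moreover have "e \<in> bE ?H" using i unfolding Mk_contracted_def by auto
    ultimately show "e \<in> bE ?H - {{j, j+k}}" by simp
  qed
  moreover have "j + k \<notin> e" if "e \<in> bE ?H'" for e
    using mk j that by (auto simp: Mk_contracted_def)
  ultimately have "(\<lambda>e. ?f ` e) ` (bE ?H - {{j, j+k}}) = bE ?H'"
    using edges_id_upd_eq by metis
  then show "bE (bgr_map ?f (?H\<lparr>bE := bE ?H - {{j, j+k}}\<rparr>)) = bE ?H'"
    by simp
  show "bin (bgr_map ?f (?H\<lparr>bE := bE ?H - {{j, j+k}}\<rparr>)) = bin ?H'"
    by (simp add: Mk_contracted_def map_id_upd_eq del: fun_upd_apply)
  have "[k+j..<2*k] = (j + k) # [k + Suc j..<2*k]" using j mk by (simp add: upt_conv_Cons)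
  then show "bout (bgr_map ?f (?H\<lparr>bE := bE ?H - {{j, j+k}}\<rparr>)) = bout ?H'"
    unfolding Mk_contracted_def by (simp add: map_id_upd_eq)
qed

lemma Mk_contracted_minor:
  assumes mk: "m \<le> k"
  shows "j \<le> m \<Longrightarrow> bminor (Mk k) (Mk_contracted k m j)"
proof (induction j)
  case 0
  have "Mk_contracted k m 0 = (Mk k)\<lparr>bE := bE (Mk_contracted k m 0)\<rparr>"
    by (rule bgr_eqI) (simp_all add: Mk_contracted_def Mk_def)
  moreover have "bE (Mk_contracted k m 0) \<subseteq> bE (Mk k)"
    using mk by (auto simp: Mk_contracted_def Mk_def)
  ultimately show ?case using bminor_restrict_edges[OF bminor_refl finite_bE[OF wf_Mk]] by metis
next
  case (Suc j)
  then have j: "j < m" and IH: "bminor (Mk k) (Mk_contracted k m j)" by simp_all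
  have "{j, j+k} \<in> bE (Mk_contracted k m j)" using j unfolding Mk_contracted_def by auto
  moreover have "j \<noteq> j + k" "j \<in> bV (Mk_contracted k m j)" "j + k \<in> bV (Mk_contracted k m j)"
    using j mk by (simp_all add: Mk_contracted_def)
  ultimately show ?case using bminor_contract_edge[OF IH] Mk_contracted_Suc[OF j mk] by metis
qed

text \<open>\<open>C\<^sub>k\<close> with all edges deleted except the path \<open>m, m + 1, \<dots>, k - 1\<close> of in-labels, whose first
  \<open>j\<close> edges are contracted onto \<open>m\<close>.\<close>

definition Ck_path_contracted :: "nat \<Rightarrow> nat \<Rightarrow> nat \<Rightarrow> nat bgr" where
  "Ck_path_contracted k m j = \<lparr>bV = {0..<2*k} - {Suc m..<Suc m + j},
     bE = {e. Suc m + j < k \<and> e = {m, Suc m + j}} \<union> {{i, i+1} | i. Suc m + j \<le> i \<and> i < k - 1},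
     bin = [0..<Suc m] @ replicate j m @ [Suc m + j..<k], bout = [k..<2*k]\<rparr>"

lemma Ck_path_contracted_Suc_edges:
  assumes j: "Suc m + j < k"
  shows "(\<lambda>e. id(Suc m + j := m) ` e) ` (bE (Ck_path_contracted k m j) - {{m, Suc m + j}})
    = bE (Ck_path_contracted k m (Suc j))"
    (is "(\<lambda>e. ?f ` e) ` (bE ?H - _) = bE ?H'")
proof -
  let ?b = "Suc m + j"
  have "m \<notin> {i, i+1}" if "?b \<le> i" for i using that by auto
  then have E1: "bE ?H - {{m, ?b}} = {{i, i+1} | i. ?b \<le> i \<and> i < k - 1}"
    unfolding Ck_path_contracted_def bgr.select_convs by blast
  have step: "?f ` {i, i+1} \<in> bE ?H'" if "?b \<le> i" "i < k - 1" for i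
  proof (cases "i = ?b")
    case True
    then have "?f ` {i, i+1} = {m, Suc m + Suc j}" by auto
    moreover have "Suc m + Suc j < k" using that True by simp
    then have "{m, Suc m + Suc j} \<in> bE ?H'" by (simp add: Ck_path_contracted_def)
    ultimately show ?thesis by simp
  next
    case False
    then have "?f ` {i, i+1} = {i, i+1}" using that by (intro image_id_upd_eq) auto
    moreover have "Suc ?b \<le> i" "i < k - 1" using that False by simp_all
    then have "{i, i+1} \<in> bE ?H'"
      unfolding Ck_path_contracted_def bgr.select_convs by (intro UnI2 CollectI exI[of _ i]) simp
    ultimately show ?thesis by simp
  qed
  have covered: "e \<in> (\<lambda>e. ?f ` e) ` {{i, i+1} | i. ?b \<le> i \<and> i < k - 1}" if "e \<in> bE ?H'" for e
  proof -
    from that have "(e = {m, Suc ?b} \<and> Suc ?b < k) \<or> (\<exists>i. e = {i, i+1} \<and> Suc ?b \<le> i \<and> i < k - 1)"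
      unfolding Ck_path_contracted_def by simp
    then consider "Suc ?b < k" "e = {m, Suc ?b}" | i where "e = {i, i+1}" "Suc ?b \<le> i" "i < k - 1"
      by blast
    then show ?thesis
    proof cases
      case 1
      then have "e = ?f ` {?b, ?b + 1}" by auto
      then show ?thesis by (rule image_eqI) (use 1 in auto)
    next
      case 2
      then have "e = ?f ` {i, i + 1}" by (simp add: image_id_upd_eq)
      then show ?thesis by (rule image_eqI) (use 2 in auto)
    qed
  qed
  have "(\<lambda>e. ?f ` e) ` {{i, i+1} | i. ?b \<le> i \<and> i < k - 1} = bE ?H'"
    using step covered by (intro subset_antisym image_subsetI subsetI) auto
  then show ?thesis using E1 by simp
qed

lemma Ck_path_contracted_Suc:
  assumes j: "Suc m + j < k"
  shows "bgr_map (id(Suc m + j := m))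
      ((Ck_path_contracted k m j)\<lparr>bE := bE (Ck_path_contracted k m j) - {{m, Suc m + j}}\<rparr>)
    = Ck_path_contracted k m (Suc j)"
    (is "bgr_map ?f (?H\<lparr>bE := _\<rparr>) = ?H'")
proof (rule bgr_eqI)
  let ?b = "Suc m + j"
  have ab: "m \<noteq> ?b" and a: "m \<in> bV ?H" and b: "?b \<in> bV ?H"
    using j by (simp_all add: Ck_path_contracted_def)
  have "bV (bgr_map ?f (?H\<lparr>bE := bE ?H - {{m, ?b}}\<rparr>)) = bV ?H - {?b}"
    using image_id_upd_contract[OF a b ab] by simp
  also have "\<dots> = bV ?H'" by (auto simp: Ck_path_contracted_def)
  finally show "bV (bgr_map ?f (?H\<lparr>bE := bE ?H - {{m, ?b}}\<rparr>)) = bV ?H'" .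
  show "bE (bgr_map ?f (?H\<lparr>bE := bE ?H - {{m, ?b}}\<rparr>)) = bE ?H'"
    using Ck_path_contracted_Suc_edges[OF j] by simp
  have "[?b..<k] = ?b # [Suc ?b..<k]" using j by (simp add: upt_conv_Cons)
  then have "map ?f (bin ?H) = [0..<Suc m] @ replicate j m @ m # [Suc ?b..<k]"
    unfolding Ck_path_contracted_def by (simp add: map_id_upd_eq)
  then show "bin (bgr_map ?f (?H\<lparr>bE := bE ?H - {{m, ?b}}\<rparr>)) = bin ?H'"
    by (simp add: Ck_path_contracted_def replicate_append_same[symmetric])
  have "?b \<notin> set [k..<2*k]" using j by simp
  then show "bout (bgr_map ?f (?H\<lparr>bE := bE ?H - {{m, ?b}}\<rparr>)) = bout ?H'"
    by (simp add: Ck_path_contracted_def map_id_upd_eq del: fun_upd_apply)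
qed

lemma Ck_path_contracted_minor:
  assumes mk: "m < k"
  shows "Suc m + j \<le> k \<Longrightarrow> bminor (Ck k) (Ck_path_contracted k m j)"
proof (induction j)
  case 0
  have "Ck_path_contracted k m 0 = (Ck k)\<lparr>bE := bE (Ck_path_contracted k m 0)\<rparr>"
  proof (rule bgr_eqI)
    have "[0..<Suc m] @ [Suc m..<k] = [0..<k]" using mk by (metis Suc_leI le_add_diff_inverse upt_add_eq_append zero_le)
    then show "bin (Ck_path_contracted k m 0) = bin ((Ck k)\<lparr>bE := bE (Ck_path_contracted k m 0)\<rparr>)"
      by (simp add: Ck_path_contracted_def Ck_def)
  qed (simp_all add: Ck_path_contracted_def Ck_def)
  moreover have "bE (Ck_path_contracted k m 0) \<subseteq> bE (Ck k)"
  proof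
    fix e assume "e \<in> bE (Ck_path_contracted k m 0)"
    then have "\<exists>i. e = {i, i+1} \<and> i < k - 1"
      unfolding Ck_path_contracted_def by (auto intro: exI[of _ m])
    then show "e \<in> bE (Ck k)" unfolding Ck_def by auto
  qed
  ultimately show ?case using bminor_restrict_edges[OF bminor_refl finite_bE[OF wf_Ck]] by metis
next
  case (Suc j)
  then have j: "Suc m + j < k" and IH: "bminor (Ck k) (Ck_path_contracted k m j)" by simp_all
  have "{m, Suc m + j} \<in> bE (Ck_path_contracted k m j)" using j unfolding Ck_path_contracted_def by simp
  moreover have "m \<noteq> Suc m + j" "m \<in> bV (Ck_path_contracted k m j)"
    "Suc m + j \<in> bV (Ck_path_contracted k m j)"
    using j by (simp_all add: Ck_path_contracted_def)
  ultimately show ?case using bminor_contract_edge[OF IH] Ck_path_contracted_Suc[OF j] by metis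
qed

text \<open>\<open>C\<^sub>k\<close> with the edge between in-label \<open>k - 1\<close> and out-label \<open>k - 1\<close> contracted and all other
  edges deleted.\<close>

definition Ck_tie :: "nat \<Rightarrow> nat bgr" where
  "Ck_tie k = \<lparr>bV = {0..<2*k-1}, bE = {}, bin = [0..<k], bout = [k..<2*k-1] @ [k-1]\<rparr>"

lemma Ck_tie_QP:
  assumes k: "0 < k"
  shows "Ck_tie k \<in> QP k"
proof -
  let ?a = "k - 1" and ?b = "2*k - 1"
  let ?H = "(Ck k)\<lparr>bE := {{?a, ?b}}\<rparr>" and ?f = "id(?b := ?a)"
  have "{{?a, ?b}} \<subseteq> bE (Ck k)" using k by (simp add: Ck_def)
  then have m: "bminor (Ck k) ?H" using bminor_restrict_edges[OF bminor_refl finite_bE[OF wf_Ck]] by blast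
  have ab: "?a \<noteq> ?b" and a: "?a \<in> bV ?H" and b: "?b \<in> bV ?H" using k by (simp_all add: Ck_def)
  have "bgr_map ?f (?H\<lparr>bE := bE ?H - {{?a, ?b}}\<rparr>) = Ck_tie k"
  proof (rule bgr_eqI)
    have "bV (bgr_map ?f (?H\<lparr>bE := bE ?H - {{?a, ?b}}\<rparr>)) = bV ?H - {?b}"
      using image_id_upd_contract[OF a b ab] by simp
    also have "\<dots> = bV (Ck_tie k)" using k by (auto simp: Ck_tie_def Ck_def)
    finally show "bV (bgr_map ?f (?H\<lparr>bE := bE ?H - {{?a, ?b}}\<rparr>)) = bV (Ck_tie k)" .
    show "bE (bgr_map ?f (?H\<lparr>bE := bE ?H - {{?a, ?b}}\<rparr>)) = bE (Ck_tie k)"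
      by (simp add: Ck_tie_def)
    have "?b \<notin> set [0..<k]" using k by simp
    then show "bin (bgr_map ?f (?H\<lparr>bE := bE ?H - {{?a, ?b}}\<rparr>)) = bin (Ck_tie k)"
      by (simp add: Ck_tie_def Ck_def map_id_upd_eq del: fun_upd_apply)
    have "[k..<2*k] = [k..<?b] @ [?b]" using k by (simp add: upt_Suc_append[symmetric])
    moreover have "?b \<notin> set [k..<?b]" by simp
    ultimately show "bout (bgr_map ?f (?H\<lparr>bE := bE ?H - {{?a, ?b}}\<rparr>)) = bout (Ck_tie k)"
      by (simp add: Ck_tie_def Ck_def map_id_upd_eq)
  qed
  then show ?thesis using bminor_contract_edge[OF m _ ab a b] unfolding QP_def by simp
qed

lemma Ck_tie_labels:
  assumes "i < k"
  shows "bin (Ck_tie k) ! i = i" "bout (Ck_tie k) ! i = (if i < k - 1 then k + i else k - 1)"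
  using assms by (auto simp: Ck_tie_def nth_append)

lemma Mk_contracted_all:
  assumes "j \<le> k"
  shows "bE (Mk_contracted k j j) = {}" "bV (Mk_contracted k j j) = {0..<2*k} - {k..<k + j}"
    "bin (Mk_contracted k j j) = [0..<k]" "bout (Mk_contracted k j j) = [0..<j] @ [k + j..<2*k]"
    "i < k \<Longrightarrow> bout (Mk_contracted k j j) ! i = (if i < j then i else k + i)"
  using assms by (auto simp: Mk_contracted_def nth_append)

lemma Ck_path_contracted_all:
  assumes "m < k"
  shows "bE (Ck_path_contracted k m (k - Suc m)) = {}"
    "bV (Ck_path_contracted k m (k - Suc m)) = {0..<2*k} - {Suc m..<k}"
    "bin (Ck_path_contracted k m (k - Suc m)) = [0..<m] @ replicate (k - m) m"
    "bout (Ck_path_contracted k m (k - Suc m)) = [k..<2*k]"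
    "i < k \<Longrightarrow> bin (Ck_path_contracted k m (k - Suc m)) ! i = min i m"
proof -
  have "k - m = Suc (k - Suc m)" using assms by simp
  then show bin: "bin (Ck_path_contracted k m (k - Suc m)) = [0..<m] @ replicate (k - m) m"
    by (simp add: Ck_path_contracted_def)
  show "i < k \<Longrightarrow> bin (Ck_path_contracted k m (k - Suc m)) ! i = min i m"
    by (simp add: bin nth_append)
qed (use assms in \<open>auto simp: Ck_path_contracted_def\<close>)

section \<open>Tying and reindexing labels\<close>

definition parallel_pairs :: "'a bgr \<Rightarrow> 'b bgr \<Rightarrow> ('a + 'b) rel" where
  "parallel_pairs F F' = set (zip (map Inl (bin F)) (map Inr (bin F')))
     \<union> set (zip (map Inl (bout F)) (map Inr (bout F')))"

lemma parallel_iff: "parallel F F' H \<longleftrightarrow> (\<exists>h. quot (dunion_par F F') (parallel_pairs F F') h H)"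
  by (simp add: parallel_def parallel_pairs_def)

lemma mem_parallel_pairs:
  assumes "wf_bgr k F" and "wf_bgr k F'"
  shows "(x, y) \<in> parallel_pairs F F' \<longleftrightarrow>
    (\<exists>i<k. (x = Inl (bin F ! i) \<and> y = Inr (bin F' ! i)) \<or> (x = Inl (bout F ! i) \<and> y = Inr (bout F' ! i)))"
  using assms unfolding wf_bgr_def parallel_pairs_def Un_iff mem_set_zip_map by auto

lemma parallel_Ck_tie:
  assumes k: "0 < k" and G: "wf_bgr k G" and par: "parallel G (Ck_tie k) H"
  shows "\<exists>h. quot G {(bin G ! (k - 1), bout G ! (k - 1))} h H"
proof -
  let ?D = "dunion_par G (Ck_tie k)" and ?P = "parallel_pairs G (Ck_tie k)"
  let ?R = "{(bin G ! (k - 1), bout G ! (k - 1))}"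
  obtain h where q: "quot ?D ?P h H" using par unfolding parallel_iff by blast
  have "wf_bgr k (Ck_tie k)" using Ck_tie_QP[OF k] PP_wf_bgr PP.PP_base by blast
  note pairs = mem_parallel_pairs[OF G this]
  have labels: "bin G ! i \<in> bV G" "bout G ! i \<in> bV G" if "i < k" for i
    using G that unfolding wf_bgr_def by auto
  define \<rho> where "\<rho> x = (case x of Inl a \<Rightarrow> a | Inr j \<Rightarrow> if j < k then bin G ! j else bout G ! (j - k))"
    for x
  have \<iota>_ok: "Inl u \<in> bV ?D \<and> \<rho> (Inl u) = u" if "u \<in> bV G" for u
    using that by (simp add: dunion_par_def \<rho>_def)
  have \<rho>_ok: "\<rho> x \<in> bV G \<and> (x, Inl (\<rho> x)) \<in> (?P \<union> ?P\<inverse>)\<^sup>*" if x: "x \<in> bV ?D" for x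
  proof (cases x)
    case (Inr j)
    then have j: "j < 2 * k - 1" using x by (auto simp: dunion_par_def Ck_tie_def)
    have "(Inl (\<rho> x), x) \<in> ?P \<and> \<rho> x \<in> bV G"
    proof (cases "j < k")
      case True
      then show ?thesis unfolding pairs
        using Inr Ck_tie_labels(1)[OF True] labels(1)[OF True] by (intro conjI exI[of _ j]) (simp_all add: \<rho>_def)
    next
      case False
      then have "j - k < k" "bout (Ck_tie k) ! (j - k) = j" using j Ck_tie_labels(2)[of "j - k" k] by auto
      then show ?thesis unfolding pairs
        using Inr False labels(2) by (intro conjI exI[of _ "j - k"]) (simp_all add: \<rho>_def)
    qed
    then show ?thesis by blast
  qed (use x in \<open>auto simp: dunion_par_def \<rho>_def\<close>)
  have P_ok: "(\<rho> a, \<rho> b) \<in> (?R \<union> ?R\<inverse>)\<^sup>*" if "(a, b) \<in> ?P" for a b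
  proof -
    from that obtain i where i: "i < k"
      "(a = Inl (bin G ! i) \<and> b = Inr i) \<or> (a = Inl (bout G ! i) \<and> b = Inr (bout (Ck_tie k) ! i))"
      unfolding pairs using Ck_tie_labels by auto
    show ?thesis
    proof (cases "i = k - 1")
      case True
      then have "\<rho> a = \<rho> b \<or> (\<rho> b, \<rho> a) \<in> ?R"
        using i Ck_tie_labels k by (auto simp: \<rho>_def)
      then show ?thesis by auto
    qed (use i Ck_tie_labels in \<open>auto simp: \<rho>_def\<close>)
  qed
  have R_ok: "(Inl a, Inl b) \<in> (?P \<union> ?P\<inverse>)\<^sup>*" if "(a, b) \<in> ?R" for a b
  proof -
    have "(Inl a, Inr (k - 1)) \<in> ?P" "(Inl b, Inr (k - 1)) \<in> ?P"
      using that k Ck_tie_labels[of "k - 1" k] unfolding pairs by (auto intro!: exI[of _ "k - 1"])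
    then show ?thesis by (meson UnCI converseI r_into_rtrancl rtrancl_trans)
  qed
  note retract = quot_retract[OF q \<iota>_ok \<rho>_ok P_ok R_ok]
  have "H = bgr_map h ?D" using q unfolding quot_iff by blast
  then have "H = bgr_map (h \<circ> Inl) G"
    using retract(2) by (intro bgr_eqI) (simp_all add: dunion_par_def Ck_tie_def image_comp)
  moreover have "?R \<subseteq> bV G \<times> bV G" using labels k by simp
  ultimately show ?thesis using retract(1) unfolding quot_iff by blast
qed

definition reindexing :: "nat list \<Rightarrow> 'a bgr \<Rightarrow> bool" where
  "reindexing I N \<longleftrightarrow> bE N = {} \<and> bV N = set (bout N) \<and> distinct (bout N) \<and> bin N = map ((!) (bout N)) I"

lemma series_reindexing:
  assumes N: "reindexing I N" "wf_bgr k N" and G: "wf_bgr k G" and I: "set I \<subseteq> {..<k}"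
    and ser: "series N G H"
  shows "iso_b (G\<lparr>bin := map ((!) (bin G)) I\<rparr>) H"
proof -
  let ?D = "dunion_ser N G" and ?P = "set (zip (map Inl (bout N)) (map Inr (bin G)))"
  obtain h where q: "quot ?D ?P h H" using ser unfolding series_def by blast
  have len: "length (bout N) = k" "length (bin G) = k" and labels: "set (bin G) \<subseteq> bV G"
    using N G unfolding wf_bgr_def by simp_all
  have N': "bE N = {}" "bV N = set (bout N)" "distinct (bout N)" "bin N = map ((!) (bout N)) I"
    using N(1) unfolding reindexing_def by blast+
  have pair: "(Inl (bout N ! i), Inr (bin G ! i)) \<in> ?P" if "i < k" for i
    using that len by (auto simp: mem_set_zip_map intro!: exI[of _ i])
  define idx where "idx = the_inv_into {..<k} ((!) (bout N))"
  have idx: "idx (bout N ! i) = i" if "i < k" for i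
    unfolding idx_def using that N'(3) len by (intro the_inv_into_f_f) (auto simp: inj_on_def nth_eq_iff_index_eq)
  define \<rho> where "\<rho> x = (case x of Inl n \<Rightarrow> bin G ! idx n | Inr a \<Rightarrow> a)" for x
  have \<iota>_ok: "Inr u \<in> bV ?D \<and> \<rho> (Inr u) = u" if "u \<in> bV G" for u
    using that by (simp add: dunion_ser_def \<rho>_def)
  have \<rho>_ok: "\<rho> x \<in> bV G \<and> (x, Inr (\<rho> x)) \<in> (?P \<union> ?P\<inverse>)\<^sup>*" if x: "x \<in> bV ?D" for x
  proof (cases x)
    case (Inl n)
    then obtain i where i: "i < k" "n = bout N ! i"
      using x N'(2) len by (auto simp: dunion_ser_def in_set_conv_nth)
    then show ?thesis using Inl pair[OF i(1)] idx labels len by (auto simp: \<rho>_def)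
  qed (use x in \<open>auto simp: dunion_ser_def \<rho>_def\<close>)
  have P_ok: "(\<rho> a, \<rho> b) \<in> ({} \<union> {}\<inverse>)\<^sup>*" if "(a, b) \<in> ?P" for a b
    using that len idx by (auto simp: mem_set_zip_map \<rho>_def)
  note retract = quot_retract[OF q \<iota>_ok \<rho>_ok P_ok emptyE]
  have "H = bgr_map h ?D" using q unfolding quot_iff by blast
  moreover have "h (Inl (bout N ! i)) = h (Inr (bin G ! i))" if "i < k" for i
    using quot_related[OF q pair[OF that]] .
  ultimately have "H = bgr_map (h \<circ> Inr) (G\<lparr>bin := map ((!) (bin G)) I\<rparr>)"
    using retract(2) I N'(1,4) by (intro bgr_eqI) (auto simp: dunion_ser_def image_comp)
  moreover have "inj_on (h \<circ> Inr) (bV G)" using retract(1) by (simp add: quotient_map_empty_iff)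
  ultimately show ?thesis unfolding iso_b_iff_bgr_map by auto
qed

lemma series_reindexing_bstar:
  assumes "reindexing I N" "wf_bgr k N" "wf_bgr k G" "set I \<subseteq> {..<k}" "series G (bstar N) H"
  shows "iso_b (G\<lparr>bout := map ((!) (bout G)) I\<rparr>) H"
proof -
  have "series N (bstar G) (bstar H)" using series_bstar[OF assms(5)] by simp
  moreover have "wf_bgr k (bstar G)" using assms(3) unfolding wf_bgr_def by simp
  ultimately have "iso_b ((bstar G)\<lparr>bin := map ((!) (bin (bstar G))) I\<rparr>) (bstar H)"
    using series_reindexing assms(1,2,4) by blast
  then have "iso_b (bstar ((bstar G)\<lparr>bin := map ((!) (bin (bstar G))) I\<rparr>)) (bstar (bstar H))"
    by (rule iso_b_bstar)
  moreover have "bstar ((bstar G)\<lparr>bin := map ((!) (bin (bstar G))) I\<rparr>) = G\<lparr>bout := map ((!) (bout G)) I\<rparr>"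
    by (simp add: bstar_def)
  ultimately show ?thesis by (simp only: bstar_bstar)
qed

text \<open>For \<open>m \<ge> length xs\<close> the out-of-range element \<open>xs ! m\<close> is replicated zero times.\<close>

definition collapse_labels :: "nat \<Rightarrow> 'a list \<Rightarrow> 'a list" where
  "collapse_labels m xs = take m xs @ replicate (length xs - m) (xs ! m)"

lemma length_collapse_labels [simp]: "length (collapse_labels m xs) = length xs"
  by (simp add: collapse_labels_def)

lemma nth_collapse_labels: "i < length xs \<Longrightarrow> collapse_labels m xs ! i = xs ! min i m"
  by (auto simp: collapse_labels_def nth_append min_def)

lemma collapse_labels_full: "collapse_labels (length xs) xs = xs"
  by (simp add: collapse_labels_def)

lemma set_collapse_labels: "set (collapse_labels m xs) \<subseteq> set xs"
  by (auto simp: collapse_labels_def dest: in_set_takeD)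

lemma Mk_Ck_contracted_QS_QP:
  assumes "m < k"
  shows "Mk_contracted k (Suc m) (Suc m) \<in> QS k" "Ck_path_contracted k m (k - Suc m) \<in> QP k"
  using assms Mk_contracted_minor[of "Suc m" k "Suc m"] Ck_path_contracted_minor[of m k "k - Suc m"]
  by (simp_all add: QS_def QP_def)

lemma parallel_reindexing_quotient:
  fixes m k :: nat
  defines "M \<equiv> Mk_contracted k (Suc m) (Suc m)" and "C \<equiv> Ck_path_contracted k m (k - Suc m)"
  assumes mk: "m < k" and q: "quot (dunion_par M C) (parallel_pairs M C) h N"
  shows "inj_on (h \<circ> Inl) (set (bout M))" "bV N = (h \<circ> Inl) ` set (bout M)"
    "\<And>i. i < k \<Longrightarrow> h (Inl i) = h (Inl (min i m))"
proof -
  let ?D = "dunion_par M C" and ?P = "parallel_pairs M C"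
  note M = Mk_contracted_all[OF Suc_leI[OF mk], folded M_def]
    and C = Ck_path_contracted_all[OF mk, folded C_def]
  have "wf_bgr k M" "wf_bgr k C"
    using Mk_Ck_contracted_QS_QP[OF mk] PP_wf_bgr PP.PP_base unfolding M_def C_def by blast+
  note pairs = mem_parallel_pairs[OF this]
  have in_pair: "(Inl i, Inr (min i m)) \<in> ?P" if "i < k" for i
    unfolding pairs using that mk M C by (intro exI[of _ i]) simp
  have out_pair: "(Inl (if i \<le> m then i else k + i), Inr (k + i)) \<in> ?P" if "i < k" for i
    unfolding pairs using that mk M C by (intro exI[of _ i]) auto
  define \<rho> where "\<rho> x = (case x of Inl a \<Rightarrow> if a \<le> m then a else if a < k then m else a
      | Inr b \<Rightarrow> if b < k then b else if b - k \<le> m then b - k else b)" for x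
  have \<iota>_ok: "Inl u \<in> bV ?D \<and> \<rho> (Inl u) = u" if "u \<in> set (bout M)" for u
    using that mk by (auto simp: M dunion_par_def \<rho>_def)
  have \<rho>_ok: "\<rho> x \<in> set (bout M) \<and> (x, Inl (\<rho> x)) \<in> (?P \<union> ?P\<inverse>)\<^sup>*" if x: "x \<in> bV ?D" for x
  proof (cases x)
    case (Inl a)
    then have a: "a < 2 * k" "a < k \<or> k + Suc m \<le> a" using x by (auto simp: dunion_par_def M)
    show ?thesis
    proof (cases "m < a \<and> a < k")
      case True
      then have "(Inl a, Inr m) \<in> ?P" "(Inl m, Inr m) \<in> ?P" using in_pair[of a] in_pair[of m] mk by auto
      then have "(Inl a, Inl m) \<in> (?P \<union> ?P\<inverse>)\<^sup>*" by (meson UnCI converseI r_into_rtrancl rtrancl_trans)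
      then show ?thesis using Inl True mk by (simp add: \<rho>_def M)
    qed (use Inl a mk in \<open>auto simp: \<rho>_def M\<close>)
  next
    case (Inr b)
    then have b: "b < 2 * k" "b \<le> m \<or> k \<le> b" using x by (auto simp: dunion_par_def C)
    show ?thesis
    proof (cases "b < k")
      case True
      then have "(Inl b, Inr b) \<in> ?P" using in_pair[of b] b by (simp add: min_def)
      then show ?thesis using Inr True b by (auto simp: \<rho>_def M)
    next
      case False
      then have bk: "b - k < k" "k + (b - k) = b" using b by auto
      have "(Inl (if b - k \<le> m then b - k else b), Inr b) \<in> ?P"
        using out_pair[OF bk(1), unfolded bk(2)] .
      then show ?thesis using Inr False b mk by (auto simp: \<rho>_def M)
    qed
  qed
  have P_ok: "(\<rho> a, \<rho> b) \<in> ({} \<union> {}\<inverse>)\<^sup>*" if "(a, b) \<in> ?P" for a b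
  proof -
    from that obtain i where "i < k"
      "(a = Inl (bin M ! i) \<and> b = Inr (bin C ! i)) \<or> (a = Inl (bout M ! i) \<and> b = Inr (bout C ! i))"
      unfolding pairs by blast
    moreover from this(1) have "bin M ! i = i" "bin C ! i = min i m"
      "bout M ! i = (if i \<le> m then i else k + i)" "bout C ! i = k + i"
      using M(5) C(5) by (simp_all add: M(3) C(4))
    ultimately show ?thesis by (auto simp: \<rho>_def)
  qed
  note retract = quot_retract[OF q \<iota>_ok \<rho>_ok P_ok emptyE]
  then show "inj_on (h \<circ> Inl) (set (bout M))" "bV N = (h \<circ> Inl) ` set (bout M)"
    by (simp_all add: quotient_map_empty_iff)
  fix i assume i: "i < k"
  have "Inl i \<in> bV ?D" "\<rho> (Inl i) = min i m" using i by (simp_all add: dunion_par_def M \<rho>_def)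
  then show "h (Inl i) = h (Inl (min i m))"
    using \<rho>_ok \<iota>_ok q unfolding quot_iff quotient_map_def by metis
qed

text \<open>The series composition \<open>N \<cdot> G\<close> for the graph \<open>N\<close> below keeps the first \<open>m\<close> in-labels of \<open>G\<close>
  and replaces all later ones by the \<open>m\<close>-th.\<close>

lemma parallel_reindexing:
  assumes mk: "m < k"
    and par: "parallel (Mk_contracted k (Suc m) (Suc m)) (Ck_path_contracted k m (k - Suc m)) N"
  shows "reindexing (collapse_labels m [0..<k]) N"
proof -
  let ?M = "Mk_contracted k (Suc m) (Suc m)" and ?C = "Ck_path_contracted k m (k - Suc m)"
  obtain h where q: "quot (dunion_par ?M ?C) (parallel_pairs ?M ?C) h N"
    using par unfolding parallel_iff by blast
  note M = Mk_contracted_all[OF Suc_leI[OF mk]] and C = Ck_path_contracted_all[OF mk]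
  note quotient = parallel_reindexing_quotient[OF mk q]
  have N: "N = bgr_map h (dunion_par ?M ?C)" using q unfolding quot_iff by blast
  have lenM: "length (bout ?M) = k" using mk by (simp add: M(4))
  have "bE N = {}" using mk by (simp add: N dunion_par_def M C)
  moreover have "bV N = set (bout N)" using quotient(2) by (simp add: N dunion_par_def image_comp)
  moreover have "distinct (bout ?M)" using mk by (simp add: M)
  then have "distinct (bout N)" using quotient(1) by (simp add: N dunion_par_def distinct_map)
  moreover have "bin N = map ((!) (bout N)) (collapse_labels m [0..<k])"
  proof (rule nth_equalityI)
    show "length (bin N) = length (map ((!) (bout N)) (collapse_labels m [0..<k]))"
      using mk by (simp add: N dunion_par_def M)
    fix i assume "i < length (bin N)"
    then have i: "i < k" using mk by (simp add: N dunion_par_def M)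
    have "bin N ! i = h (Inl i)" using i mk by (simp add: N dunion_par_def M)
    also have "\<dots> = h (Inl (min i m))" by (rule quotient(3)[OF i])
    also have "\<dots> = h (Inl (bout ?M ! min i m))" using i M(5)[of "min i m"] by (simp add: min_def)
    also have "\<dots> = bout N ! min i m"
      using i mk lenM by (simp add: N dunion_par_def)
    also have "\<dots> = map ((!) (bout N)) (collapse_labels m [0..<k]) ! i"
      using i by (simp add: nth_collapse_labels)
    finally show "bin N ! i = map ((!) (bout N)) (collapse_labels m [0..<k]) ! i" .
  qed
  ultimately show ?thesis unfolding reindexing_def by blast
qed

lemma reindexing_exists:
  assumes "m < k"
  shows "\<exists>N\<in>PP k. reindexing (collapse_labels m [0..<k]) N"
proof -
  let ?M = "Mk_contracted k (Suc m) (Suc m)" and ?C = "Ck_path_contracted k m (k - Suc m)"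
  have M: "?M \<in> PP k" and C: "?C \<in> QP k"
    using Mk_Ck_contracted_QS_QP[OF assms] PP.PP_base by blast+
  then obtain N :: "nat bgr" where "parallel ?M ?C N"
    using parallel_exists PP_wf_bgr PP.PP_base by blast
  then show ?thesis using PP.PP_parallel[OF M C] parallel_reindexing[OF assms] by blast
qed

section \<open>Zipping the labels\<close>

lemma bgr_map_reindex_labels:
  assumes "set I \<subseteq> {..<length (bin G)}" and "set J \<subseteq> {..<length (bout G)}"
  shows "bgr_map f (G\<lparr>bin := map ((!) (bin G)) I, bout := map ((!) (bout G)) J\<rparr>)
    = (bgr_map f G)\<lparr>bin := map ((!) (bin (bgr_map f G))) I, bout := map ((!) (bout (bgr_map f G))) J\<rparr>"
  using assms by (intro bgr_eqI) auto

lemma quot_reindex_labels: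
  assumes "quot X P g G" and "set I \<subseteq> {..<length (bin X)}" and "set J \<subseteq> {..<length (bout X)}"
  shows "quot (X\<lparr>bin := map ((!) (bin X)) I, bout := map ((!) (bout X)) J\<rparr>) P g
    (G\<lparr>bin := map ((!) (bin G)) I, bout := map ((!) (bout G)) J\<rparr>)"
  using assms bgr_map_reindex_labels[OF assms(2,3), of g] unfolding quot_iff by simp

lemma iso_b_reindex_out:
  assumes "iso_b G H" and "set J \<subseteq> {..<length (bout G)}"
  shows "iso_b (G\<lparr>bout := map ((!) (bout G)) J\<rparr>) (H\<lparr>bout := map ((!) (bout H)) J\<rparr>)"
proof -
  obtain f where f: "inj_on f (bV G)" "H = bgr_map f G" using assms(1) unfolding iso_b_iff_bgr_map by blast
  then have "H\<lparr>bout := map ((!) (bout H)) J\<rparr> = bgr_map f (G\<lparr>bout := map ((!) (bout G)) J\<rparr>)"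
    using assms(2) by (intro bgr_eqI) auto
  then show ?thesis using f(1) unfolding iso_b_iff_bgr_map by auto
qed

definition bgr_collapse :: "nat \<Rightarrow> 'a bgr \<Rightarrow> 'a bgr" where
  "bgr_collapse m T = T\<lparr>bin := collapse_labels m (bin T), bout := collapse_labels m (bout T)\<rparr>"

definition trace_pairs_from :: "nat \<Rightarrow> 'a bgr \<Rightarrow> ('a \<times> 'a) set" where
  "trace_pairs_from m T = set (zip (drop m (bin T)) (drop m (bout T)))"

lemma map_nth_collapse_labels:
  assumes "n < length xs"
  shows "map ((!) (collapse_labels (Suc n) xs)) (collapse_labels n [0..<length xs]) = collapse_labels n xs"
  using assms by (intro nth_equalityI) (simp_all add: nth_collapse_labels)

lemma trace_pairs_from_Suc:
  assumes "n < length (bin T)" and "n < length (bout T)"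
  shows "trace_pairs_from (Suc n) T \<union> {(bin T ! n, bout T ! n)} = trace_pairs_from n T"
  using assms by (auto simp: trace_pairs_from_def Cons_nth_drop_Suc[symmetric])

lemma PP_collapse_labels:
  assumes G: "G \<in> PP k" and n: "n < k"
  shows "\<exists>G'\<in>PP k. iso_b (G\<lparr>bin := map ((!) (bin G)) (collapse_labels n [0..<k]),
    bout := map ((!) (bout G)) (collapse_labels n [0..<k])\<rparr>) G'"
proof -
  let ?I = "collapse_labels n [0..<k]"
  have wfG: "wf_bgr k G" using G by (rule PP_wf_bgr)
  have I: "set ?I \<subseteq> {..<k}" using set_collapse_labels[of n "[0..<k]"] by auto
  obtain N where N: "N \<in> PP k" "reindexing ?I N" using reindexing_exists[OF n] by blast
  have wfN: "wf_bgr k N" "wf_bgr k (bstar N)" using N(1) PP_bstar by (simp_all add: PP_wf_bgr)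
  obtain G1 :: "nat bgr" where ser1: "series N G G1" using series_exists wfN wfG by blast
  have G1: "G1 \<in> PP k" using N(1) G ser1 by (rule PP.PP_series)
  then obtain G2 :: "nat bgr" where ser2: "series G1 (bstar N) G2"
    using series_exists wfN PP_wf_bgr by blast
  have G2: "G2 \<in> PP k" using G1 PP_bstar[OF N(1)] ser2 by (rule PP.PP_series)
  have "iso_b (G\<lparr>bin := map ((!) (bin G)) ?I\<rparr>) G1" using series_reindexing N(2) wfN wfG I ser1 by blast
  then have "iso_b (G\<lparr>bin := map ((!) (bin G)) ?I, bout := map ((!) (bout G)) ?I\<rparr>)
      (G1\<lparr>bout := map ((!) (bout G1)) ?I\<rparr>)"
    using iso_b_reindex_out I wfG unfolding wf_bgr_def by fastforce
  moreover have "iso_b (G1\<lparr>bout := map ((!) (bout G1)) ?I\<rparr>) G2"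
    using series_reindexing_bstar N(2) wfN PP_wf_bgr[OF G1] I ser2 by blast
  ultimately show ?thesis using G2 iso_b_trans by blast
qed

lemma PP_tie_last:
  assumes G: "G \<in> PP k" and k: "0 < k"
  shows "\<exists>G'\<in>PP k. \<exists>h. quot G {(bin G ! (k - 1), bout G ! (k - 1))} h G'"
proof -
  have tie: "Ck_tie k \<in> QP k" using k by (rule Ck_tie_QP)
  then obtain G' :: "nat bgr" where "parallel G (Ck_tie k) G'"
    using parallel_exists PP_wf_bgr[OF G] PP_wf_bgr[OF PP.PP_base] by blast
  then show ?thesis using PP.PP_parallel[OF G tie] parallel_Ck_tie[OF k PP_wf_bgr[OF G]] by blast
qed

text \<open>One round of zipping: reindexing both label lists of \<open>G\<close> moves the labels of pair \<open>n\<close> to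
  position \<open>k - 1\<close>, where they are then tied together.\<close>

lemma zip_stage_step:
  assumes T: "T \<in> PP k" and n: "n < k" and G: "G \<in> PP k"
    and q: "quot (bgr_collapse (Suc n) T) (trace_pairs_from (Suc n) T) g G"
  shows "\<exists>G'\<in>PP k. \<exists>g'. quot (bgr_collapse n T) (trace_pairs_from n T) g' G'"
proof -
  let ?I = "collapse_labels n [0..<k]" and ?T = "bgr_collapse (Suc n) T"
  have wfT: "wf_bgr k T" using T by (rule PP_wf_bgr)
  then have len: "length (bin T) = k" "length (bout T) = k" unfolding wf_bgr_def by simp_all
  have "bgr_collapse n T = ?T\<lparr>bin := map ((!) (bin ?T)) ?I, bout := map ((!) (bout ?T)) ?I\<rparr>"
    using map_nth_collapse_labels[of n "bin T"] map_nth_collapse_labels[of n "bout T"] n len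
    by (simp add: bgr_collapse_def)
  moreover have "set ?I \<subseteq> {..<length (bin ?T)}" "set ?I \<subseteq> {..<length (bout ?T)}"
    using set_collapse_labels[of n "[0..<k]"] len by (auto simp: bgr_collapse_def)
  ultimately have "quot (bgr_collapse n T) (trace_pairs_from (Suc n) T) g
      (G\<lparr>bin := map ((!) (bin G)) ?I, bout := map ((!) (bout G)) ?I\<rparr>)"
    using quot_reindex_labels[OF q] by simp
  then obtain G2 g2 where G2: "G2 \<in> PP k" and q2: "quot (bgr_collapse n T) (trace_pairs_from (Suc n) T) g2 G2"
    using PP_collapse_labels[OF G n] quot_iso_b by blast
  then obtain G3 h where G3: "G3 \<in> PP k" and q3: "quot G2 {(bin G2 ! (k - 1), bout G2 ! (k - 1))} h G3"
    using PP_tie_last n by (metis gr0I not_less0)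
  have "bin G2 ! (k - 1) = g2 (bin T ! n)" "bout G2 ! (k - 1) = g2 (bout T ! n)"
    using q2 n len unfolding quot_iff by (auto simp: bgr_collapse_def nth_collapse_labels)
  then have "quot G2 ((\<lambda>(a, b). (g2 a, g2 b)) ` {(bin T ! n, bout T ! n)}) h G3" using q3 by simp
  moreover have "{(bin T ! n, bout T ! n)} \<subseteq> bV (bgr_collapse n T) \<times> bV (bgr_collapse n T)"
    using wfT n len unfolding wf_bgr_def bgr_collapse_def by auto
  ultimately have "quot (bgr_collapse n T) (trace_pairs_from (Suc n) T \<union> {(bin T ! n, bout T ! n)})
      (h \<circ> g2) G3"
    by (rule quot_comp[OF q2])
  then show ?thesis using G3 trace_pairs_from_Suc[of n T] n len by auto
qed

text \<open>The invariant after the rounds for the pairs \<open>i \<ge> m\<close>: a member of \<open>\<P>\<^sub>k\<close> is the quotient of \<open>T\<close>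
  by these pairs, with every label position \<open>i \<ge> m\<close> carrying the labels of pair \<open>m\<close>.\<close>

lemma zip_stage:
  assumes T: "T \<in> PP k" and "m \<le> k"
  shows "\<exists>G\<in>PP k. \<exists>g. quot (bgr_collapse m T) (trace_pairs_from m T) g G"
  using assms(2)
proof (induction rule: inc_induct)
  case base
  have "length (bin T) = k" "length (bout T) = k" using PP_wf_bgr[OF T] unfolding wf_bgr_def by simp_all
  then have "bgr_collapse k T = T" "trace_pairs_from k T = {}"
    using collapse_labels_full[of "bin T"] collapse_labels_full[of "bout T"]
    by (simp_all add: bgr_collapse_def trace_pairs_from_def)
  moreover have "quot T {} id T"
    unfolding quot_iff quotient_map_empty_iff by (auto intro: bgr_eqI)
  ultimately show ?case using T by metis
next
  case (step n)
  then show ?case using zip_stage_step T by blast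
qed

lemma PP_trace_quotient:
  assumes "T \<in> PP k"
  shows "\<exists>Q\<in>PP k. \<exists>g. quotient_map (bV T) (set (zip (bin T) (bout T))) g
    \<and> underlying Q = underlying (bgr_map g T)"
proof -
  obtain Q g where "Q \<in> PP k" and q: "quot (bgr_collapse 0 T) (trace_pairs_from 0 T) g Q"
    using zip_stage[OF assms] by blast
  moreover have "quotient_map (bV T) (set (zip (bin T) (bout T))) g"
    using q unfolding quot_iff by (simp add: bgr_collapse_def trace_pairs_from_def)
  moreover have "underlying Q = underlying (bgr_map g T)"
    using q unfolding quot_iff by (simp add: bgr_collapse_def underlying_def)
  ultimately show ?thesis by blast
qed

lemma btr_iff:
  assumes "wf_bgr k T"
  shows "btr T X \<longleftrightarrow>
    (\<exists>h. quotient_map (bV T) (set (zip (bin T) (bout T))) h \<and> X = underlying (bgr_map h T))"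
proof -
  have pairs: "set (zip (bin T) (bout T)) \<subseteq> bV T \<times> bV T"
    using assms unfolding wf_bgr_def by (intro set_zip_subset) simp_all
  have "\<lparr>bV = fst X, bE = snd X, bin = map h (bin T), bout = map h (bout T)\<rparr> = bgr_map h T
      \<longleftrightarrow> X = underlying (bgr_map h T)" for h :: "'a \<Rightarrow> 'b"
    by (cases X) (auto simp: underlying_def bgr_map_def)
  then show ?thesis unfolding btr_def quot_iff using pairs by auto
qed

lemma quotient_map_trace_pullback:
  assumes q: "quot D P h T" and "wf_bgr k D"
    and g: "quotient_map (bV T) (set (zip (bin T) (bout T))) g"
  shows "quotient_map (bV D) (P \<union> set (zip (bin D) (bout D))) (g \<circ> h)"
proof -
  have P: "P \<subseteq> bV D \<times> bV D" and h: "quotient_map (bV D) P h" and T: "T = bgr_map h D"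
    using q unfolding quot_iff by blast+
  have "set (zip (bin D) (bout D)) \<subseteq> bV D \<times> bV D"
    using assms(2) unfolding wf_bgr_def by (intro set_zip_subset) simp_all
  moreover have "quotient_map (h ` bV D) ((\<lambda>(a, b). (h a, h b)) ` set (zip (bin D) (bout D))) g"
    using g by (simp add: T zip_map_map)
  ultimately show ?thesis by (rule quotient_map_comp[OF P _ h])
qed

lemma btr_exists: "wf_bgr k T \<Longrightarrow> \<exists>X :: nat set \<times> nat set set. btr T X"
  using quotient_map_exists[of "bV T" "set (zip (bin T) (bout T))"] btr_iff[of k T]
  unfolding wf_bgr_def by blast

lemma series_btr_iso_u:
  assumes F: "wf_bgr k F" "wf_bgr k F'" and ser0: "series F F' T0"
    and g: "quotient_map (bV T0) (set (zip (bin T0) (bout T0))) g"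
    and ser: "series F F' T" and tr: "btr T X"
  shows "iso_u X (underlying (bgr_map g T0))"
proof -
  let ?D = "dunion_ser F F'" and ?P = "set (zip (map Inl (bout F)) (map Inr (bin F')))"
  have D: "wf_bgr k ?D" using F by (rule wf_dunion_ser)
  obtain h0 where q0: "quot ?D ?P h0 T0" using ser0 unfolding series_def by blast
  obtain h where q: "quot ?D ?P h T" using ser unfolding series_def by blast
  then have "wf_bgr k T" using D wf_bgr_map unfolding quot_iff by metis
  then obtain h2 where h2: "quotient_map (bV T) (set (zip (bin T) (bout T))) h2"
    and X: "X = underlying (bgr_map h2 T)" using tr by (auto simp: btr_iff)
  have "iso_b (bgr_map (h2 \<circ> h) ?D) (bgr_map (g \<circ> h0) ?D)"
    using quotient_map_trace_pullback[OF q D h2] quotient_map_trace_pullback[OF q0 D g]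
    by (rule quotient_maps_iso_b[OF D])
  moreover have "X = underlying (bgr_map (h2 \<circ> h) ?D)" "bgr_map g T0 = bgr_map (g \<circ> h0) ?D"
    using q q0 X unfolding quot_iff by (simp_all add: bgr_map_comp)
  ultimately show ?thesis using iso_b_underlying by simp
qed

theorem lemma4p2:
  fixes k :: nat and R S :: "nat bgr"
  assumes "R \<in> PP k" and "S \<in> PP k"
  shows "\<exists>Q\<in>PP k.
           (\<exists>(T :: nat bgr) (X :: nat set \<times> nat set set).
               series (bstar R) S T \<and> btr T X \<and> iso_u X (underlying Q))
         \<and> (\<forall>(T :: nat bgr) (X :: nat set \<times> nat set set).
               series (bstar R) S T \<longrightarrow> btr T X \<longrightarrow> iso_u X (underlying Q))"
proof -
  have R: "bstar R \<in> PP k" using assms(1) by (rule PP_bstar)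
  have wf: "wf_bgr k (bstar R)" "wf_bgr k S" using R assms(2) by (simp_all add: PP_wf_bgr)
  obtain T0 :: "nat bgr" where ser0: "series (bstar R) S T0" using series_exists wf by blast
  then have T0: "T0 \<in> PP k" using R assms(2) PP.PP_series by blast
  then obtain Q g where Q: "Q \<in> PP k" and g: "quotient_map (bV T0) (set (zip (bin T0) (bout T0))) g"
    and uQ: "underlying Q = underlying (bgr_map g T0)"
    using PP_trace_quotient by blast
  obtain X0 :: "nat set \<times> nat set set" where "btr T0 X0" using btr_exists PP_wf_bgr[OF T0] by blast
  moreover have "iso_u X (underlying Q)" if "series (bstar R) S T" and "btr T X"
    for T :: "nat bgr" and X :: "nat set \<times> nat set set"
    using series_btr_iso_u[OF wf ser0 g that] uQ by simp
  ultimately show ?thesis using Q ser0 by blast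
qed

end
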